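(* Let $\mathcal{T}=(V,A,E,f,q,v_0)$ be a decorated pseudo-rooted tree such that $f(\alpha)=1$ for every $\alpha\in A\setminus A_0$, and let $\mathscr{P}$ be a partition of $A\setminus A_0$. Then (a) $M(\mathcal{T})=\sum_{\alpha\in A\setminus A_0}M(\mathcal{T}_\alpha)-I(A\setminus A_0,A\setminus A_0)$; (b) $M(\mathcal{T})=\sum_{X\in\mathscr{P}}M(\mathcal{T}_X)-\sum_{(X,Y)\in\mathscr{P}^2,\,X\ne Y}I(X,Y)$.
   Context: A graph is a pair $(X_0,X_1)$ of finite sets such that each element of $X_1$ (an edge) is a $2$-element subset of $X_0$; elements of $X_0$ are cells. The valency $\delta_x$ of a cell is the number of edges containing it. A path is a tuple $(x_0,\dots,x_n)$ ($n\ge0$) of cells with $\{x_i,x_{i+1}\}$ an edge for each $i<n$, these edges pairwise distinct; a cell/edge is in the path if it is some $x_i$ / some $\{x_i,x_{i+1}\}$. The graph is a tree if any two cells $x,y$ are joined by a unique path $\gamma_{x,y}$. A decorated tree is $(V,A,E,f,q)$ with $V$ (vertices), $A$ (arrows) finite disjoint sets, $(V\cup A,E)$ a tree, every arrow of valency $1$, $f:A\to\mathbb{Z}$, $q(e,x)\in\mathbb{Z}$ for each $e\in E$, $x\in e$, with $q(e,\alpha)=1$ for $\alpha\in A$, and for each $v\in V$ and distinct edges $e,e'\ni v$, $\gcd(q(e,v),q(e',v))=1$. $A_0=\{\alpha\in A:f(\alpha)=0\}$. An edge $\varepsilon$ is incident to a path $\gamma$ if it is not in $\gamma$ but contains a cell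 $u$ of $\gamma$; $q(\varepsilon,\gamma):=q(\varepsilon,u)$. For $v\ne\alpha$, $v\in V\cup A$, $\alpha\in A$: $x_{v,\alpha}=f(\alpha)\prod_\varepsilon q(\varepsilon,\gamma_{v,\alpha})$ over edges incident to $\gamma_{v,\alpha}$ (empty product $=1$). For $v\in V\cup A_0$, $N_v=\sum_{\alpha\in A\setminus A_0}x_{v,\alpha}$; $M(\mathcal{T})=-\sum_{v\in V\cup A_0}N_v(\delta_v-2)$. For a path $\gamma=(x_0,\dots,x_n)$, $n>0$, and a cell $u$ of $\gamma$, $Q(\gamma,u)=\prod q(\varepsilon,u)$ over edges $\varepsilon\ni u$ not in $\gamma$; $Q^*(\gamma)=\prod_{0<i<n}Q(\gamma,x_i)$. For $X,Y\subseteq A\setminus A_0$, $I(X,Y)=\sum_{(\alpha,\beta)\in X\times Y,\,\alpha\ne\beta}Q^*(\gamma_{\alpha,\beta})f(\alpha)f(\beta)$. A pseudo-root of $(V,A,E,f,q)$ is a vertex $v_0$ with $q(e,v_0)=1$ for all edges $e\ni v_0$, such that for every $v\in V\setminus\{v_0\}$ at most one edge $e\ni v$ not in $\gamma_{v_0,v}$ has $q(e,v)\ne1$. A decorated pseudo-rooted tree is $(V,A,E,f,q,v_0)$ with $v_0$ a pseudo-root. For nonempty $X\subseteq A\setminus A_0$, $\mathcal{T}_X$: let $\mathcal{T}'_X$ have arrow set $X$, vertices those of $\mathcal{T}$ on some $\gamma_{v_0,\alpha}$ ($\alpha\in X$), edges those of $\mathcal{T}$ in some $\gamma_{v_0,\alpha}$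 ($\alpha\in X$), decorations as in $\mathcal{T}$; for each vertex $v$ of $\mathcal{T}'_X$ put $b_v=\prod q(e,v)$ over edges $e$ of $\mathcal{T}$ containing $v$ not in $\mathcal{T}'_X$, and if $b_v\ne1$ add an arrow $\alpha_v$ with $f(\alpha_v)=0$ and edge $\{v,\alpha_v\}$ decorated $b_v$ near $v$, $1$ near $\alpha_v$. The result, pseudo-rooted at $v_0$, is $\mathcal{T}_X$; $\mathcal{T}_\alpha:=\mathcal{T}_{\{\alpha\}}$. Partitions consist of nonempty sets. *)

theory Defs
  imports Main "HOL-Library.Disjoint_Sets"
begin

definition is_graph :: "'a set \<Rightarrow> 'a set set \<Rightarrow> bool" where
  "is_graph X0 X1 \<longleftrightarrow> finite X0 \<and> finite X1 \<and> (\<forall>e\<in>X1. e \<subseteq> X0 \<and> card e = 2)"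

definition valency :: "'a set set \<Rightarrow> 'a \<Rightarrow> nat" where
  "valency X1 x = card {e \<in> X1. x \<in> e}"

definition path_edges :: "'a list \<Rightarrow> 'a set list" where
  "path_edges p = map (\<lambda>i. {p ! i, p ! Suc i}) [0..<length p - 1]"

definition is_path :: "'a set \<Rightarrow> 'a set set \<Rightarrow> 'a list \<Rightarrow> bool" where
  "is_path X0 X1 p \<longleftrightarrow> p \<noteq> [] \<and> set p \<subseteq> X0 \<and> set (path_edges p) \<subseteq> X1
     \<and> distinct (path_edges p)"

definition is_tree :: "'a set \<Rightarrow> 'a set set \<Rightarrow> bool" where
  "is_tree X0 X1 \<longleftrightarrow> is_graph X0 X1 \<and>
     (\<forall>x\<in>X0. \<forall>y\<in>X0. \<exists>!p. is_path X0 X1 p \<and> hd p = x \<and> last p = y)"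

definition gpath :: "'a set \<Rightarrow> 'a set set \<Rightarrow> 'a \<Rightarrow> 'a \<Rightarrow> 'a list" where
  "gpath X0 X1 x y = (THE p. is_path X0 X1 p \<and> hd p = x \<and> last p = y)"

text \<open>Decorated tree (V, A, E, f, q); f and q are only meaningful on A, resp. on pairs (e, x) with
  e in E and x in e.\<close>
definition decorated_tree ::
  "'a set \<Rightarrow> 'a set \<Rightarrow> 'a set set \<Rightarrow> ('a \<Rightarrow> int) \<Rightarrow> ('a set \<Rightarrow> 'a \<Rightarrow> int) \<Rightarrow> bool" where
  "decorated_tree V A E f q \<longleftrightarrow>
     finite V \<and> finite A \<and> V \<inter> A = {} \<and> is_tree (V \<union> A) E \<and>
     (\<forall>\<alpha>\<in>A. valency E \<alpha> = 1) \<and>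
     (\<forall>e\<in>E. \<forall>\<alpha>\<in>A. \<alpha> \<in> e \<longrightarrow> q e \<alpha> = 1) \<and>
     (\<forall>v\<in>V. \<forall>e\<in>E. \<forall>e'\<in>E. v \<in> e \<longrightarrow> v \<in> e' \<longrightarrow> e \<noteq> e' \<longrightarrow> gcd (q e v) (q e' v) = 1)"

definition zero_arrows :: "'a set \<Rightarrow> ('a \<Rightarrow> int) \<Rightarrow> 'a set" where
  "zero_arrows A f = {\<alpha> \<in> A. f \<alpha> = 0}"

definition incident_edges :: "'a set set \<Rightarrow> 'a list \<Rightarrow> 'a set set" where
  "incident_edges E \<gamma> = {\<epsilon> \<in> E. \<epsilon> \<notin> set (path_edges \<gamma>) \<and> (\<exists>u\<in>set \<gamma>. u \<in> \<epsilon>)}"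

definition q_path :: "('a set \<Rightarrow> 'a \<Rightarrow> int) \<Rightarrow> 'a set \<Rightarrow> 'a list \<Rightarrow> int" where
  "q_path q \<epsilon> \<gamma> = q \<epsilon> (THE u. u \<in> set \<gamma> \<and> u \<in> \<epsilon>)"

definition xcoef ::
  "'a set \<Rightarrow> 'a set \<Rightarrow> 'a set set \<Rightarrow> ('a \<Rightarrow> int) \<Rightarrow> ('a set \<Rightarrow> 'a \<Rightarrow> int) \<Rightarrow> 'a \<Rightarrow> 'a \<Rightarrow> int" where
  "xcoef V A E f q v \<alpha> =
     (let \<gamma> = gpath (V \<union> A) E v \<alpha> in f \<alpha> * (\<Prod>\<epsilon>\<in>incident_edges E \<gamma>. q_path q \<epsilon> \<gamma>))"

definition Ncoef ::
  "'a set \<Rightarrow> 'a set \<Rightarrow> 'a set set \<Rightarrow> ('a \<Rightarrow> int) \<Rightarrow> ('a set \<Rightarrow> 'a \<Rightarrow> int) \<Rightarrow> 'a \<Rightarrow> int" where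
  "Ncoef V A E f q v = (\<Sum>\<alpha>\<in>A - zero_arrows A f. xcoef V A E f q v \<alpha>)"

definition Mval ::
  "'a set \<Rightarrow> 'a set \<Rightarrow> 'a set set \<Rightarrow> ('a \<Rightarrow> int) \<Rightarrow> ('a set \<Rightarrow> 'a \<Rightarrow> int) \<Rightarrow> int" where
  "Mval V A E f q =
     - (\<Sum>v\<in>V \<union> zero_arrows A f. Ncoef V A E f q v * (int (valency E v) - 2))"

definition Qcell :: "'a set set \<Rightarrow> ('a set \<Rightarrow> 'a \<Rightarrow> int) \<Rightarrow> 'a list \<Rightarrow> 'a \<Rightarrow> int" where
  "Qcell E q \<gamma> u = (\<Prod>\<epsilon>\<in>{\<epsilon> \<in> E. u \<in> \<epsilon> \<and> \<epsilon> \<notin> set (path_edges \<gamma>)}. q \<epsilon> u)"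

definition Qstar :: "'a set set \<Rightarrow> ('a set \<Rightarrow> 'a \<Rightarrow> int) \<Rightarrow> 'a list \<Rightarrow> int" where
  "Qstar E q \<gamma> = (\<Prod>i\<in>{0<..<length \<gamma> - 1}. Qcell E q \<gamma> (\<gamma> ! i))"

definition Iform ::
  "'a set \<Rightarrow> 'a set \<Rightarrow> 'a set set \<Rightarrow> ('a \<Rightarrow> int) \<Rightarrow> ('a set \<Rightarrow> 'a \<Rightarrow> int) \<Rightarrow> 'a set \<Rightarrow> 'a set \<Rightarrow> int" where
  "Iform V A E f q X Y =
     (\<Sum>(\<alpha>, \<beta>)\<in>{(\<alpha>, \<beta>) \<in> X \<times> Y. \<alpha> \<noteq> \<beta>}. Qstar E q (gpath (V \<union> A) E \<alpha> \<beta>) * f \<alpha> * f \<beta>)"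

definition pseudo_root ::
  "'a set \<Rightarrow> 'a set \<Rightarrow> 'a set set \<Rightarrow> ('a set \<Rightarrow> 'a \<Rightarrow> int) \<Rightarrow> 'a \<Rightarrow> bool" where
  "pseudo_root V A E q v0 \<longleftrightarrow> v0 \<in> V \<and> (\<forall>e\<in>E. v0 \<in> e \<longrightarrow> q e v0 = 1) \<and>
     (\<forall>v\<in>V - {v0}. card {e \<in> E. v \<in> e \<and> e \<notin> set (path_edges (gpath (V \<union> A) E v0 v)) \<and> q e v \<noteq> 1} \<le> 1)"

definition decorated_pseudo_rooted_tree ::
  "'a set \<Rightarrow> 'a set \<Rightarrow> 'a set set \<Rightarrow> ('a \<Rightarrow> int) \<Rightarrow> ('a set \<Rightarrow> 'a \<Rightarrow> int) \<Rightarrow> 'a \<Rightarrow> bool" where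
  "decorated_pseudo_rooted_tree V A E f q v0 \<longleftrightarrow>
     decorated_tree V A E f q \<and> pseudo_root V A E q v0"

text \<open>Cells of T_X live in type 'a + 'a: Inl c is the cell c of T, Inr v is the new arrow alpha_v.\<close>

definition subV :: "'a set \<Rightarrow> 'a set \<Rightarrow> 'a set set \<Rightarrow> 'a \<Rightarrow> 'a set \<Rightarrow> 'a set" where
  "subV V A E v0 X = {v \<in> V. \<exists>\<alpha>\<in>X. v \<in> set (gpath (V \<union> A) E v0 \<alpha>)}"

definition subE :: "'a set \<Rightarrow> 'a set \<Rightarrow> 'a set set \<Rightarrow> 'a \<Rightarrow> 'a set \<Rightarrow> 'a set set" where
  "subE V A E v0 X = {e \<in> E. \<exists>\<alpha>\<in>X. e \<in> set (path_edges (gpath (V \<union> A) E v0 \<alpha>))}"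

definition bcoef ::
  "'a set \<Rightarrow> 'a set \<Rightarrow> 'a set set \<Rightarrow> ('a set \<Rightarrow> 'a \<Rightarrow> int) \<Rightarrow> 'a \<Rightarrow> 'a set \<Rightarrow> 'a \<Rightarrow> int" where
  "bcoef V A E q v0 X v = (\<Prod>e\<in>{e \<in> E. v \<in> e \<and> e \<notin> subE V A E v0 X}. q e v)"

definition newarr_base ::
  "'a set \<Rightarrow> 'a set \<Rightarrow> 'a set set \<Rightarrow> ('a set \<Rightarrow> 'a \<Rightarrow> int) \<Rightarrow> 'a \<Rightarrow> 'a set \<Rightarrow> 'a set" where
  "newarr_base V A E q v0 X = {v \<in> subV V A E v0 X. bcoef V A E q v0 X v \<noteq> 1}"

definition TX_V :: "'a set \<Rightarrow> 'a set \<Rightarrow> 'a set set \<Rightarrow> 'a \<Rightarrow> 'a set \<Rightarrow> ('a + 'a) set" where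
  "TX_V V A E v0 X = Inl ` subV V A E v0 X"

definition TX_A ::
  "'a set \<Rightarrow> 'a set \<Rightarrow> 'a set set \<Rightarrow> ('a set \<Rightarrow> 'a \<Rightarrow> int) \<Rightarrow> 'a \<Rightarrow> 'a set \<Rightarrow> ('a + 'a) set" where
  "TX_A V A E q v0 X = Inl ` X \<union> Inr ` newarr_base V A E q v0 X"

definition TX_E ::
  "'a set \<Rightarrow> 'a set \<Rightarrow> 'a set set \<Rightarrow> ('a set \<Rightarrow> 'a \<Rightarrow> int) \<Rightarrow> 'a \<Rightarrow> 'a set \<Rightarrow> ('a + 'a) set set" where
  "TX_E V A E q v0 X = (\<lambda>e. Inl ` e) ` subE V A E v0 X
     \<union> (\<lambda>v. {Inl v, Inr v}) ` newarr_base V A E q v0 X"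

definition TX_f :: "('a \<Rightarrow> int) \<Rightarrow> ('a + 'a) \<Rightarrow> int" where
  "TX_f f c = (case c of Inl x \<Rightarrow> f x | Inr _ \<Rightarrow> 0)"

definition TX_q ::
  "'a set \<Rightarrow> 'a set \<Rightarrow> 'a set set \<Rightarrow> ('a set \<Rightarrow> 'a \<Rightarrow> int) \<Rightarrow> 'a \<Rightarrow> 'a set \<Rightarrow>
     ('a + 'a) set \<Rightarrow> ('a + 'a) \<Rightarrow> int" where
  "TX_q V A E q v0 X e c = (case c of
      Inr _ \<Rightarrow> 1
    | Inl x \<Rightarrow> (if Inr x \<in> e then bcoef V A E q v0 X x else q (Inl -` e) x))"

text \<open>M(T_X) (the value M does not depend on the pseudo-root).\<close>
definition M_sub ::
  "'a set \<Rightarrow> 'a set \<Rightarrow> 'a set set \<Rightarrow> ('a \<Rightarrow> int) \<Rightarrow> ('a set \<Rightarrow> 'a \<Rightarrow> int) \<Rightarrow> 'a \<Rightarrow> 'a set \<Rightarrow> int" where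
  "M_sub V A E f q v0 X =
     Mval (TX_V V A E v0 X) (TX_A V A E q v0 X) (TX_E V A E q v0 X) (TX_f f) (TX_q V A E q v0 X)"

end

theory Submission
  imports Defs
begin

(* With all weights outside A0 equal to 1, M(T) is a sum over the arrows alpha outside A0 of
   leaf weights m(alpha), each of which sums -x_(v,alpha) (delta_v - 2) over all cells v.  This
   overcounts: another such arrow beta has valency 1 and adds x_(beta,alpha) = Q*(gamma_(beta,alpha)),
   and these terms add up to I(A - A0, A - A0).
   Rooting T at alpha and grouping each cell with its children gives
   m(alpha) = 1 + sum_u Y_u (kappa_u - 1), where Y_u is the product of the Q's above u and kappa_u
   only depends on the decorations at u of the edges to the children of u.  The pseudo-root
   condition forces kappa_u = 1 off the path from v0 to alpha, so m(alpha) only depends on the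
   decorations along and next to that path.  These are the same in T_X when alpha is in X, and so
   are the values Q* between arrows of X; hence M(T_X) = sum_(alpha in X) m(alpha) - I(X, X), and
   both identities follow by summing over the blocks of the partition. *)

section \<open>Paths\<close>

lemma path_edges_Nil [simp]: "path_edges [] = []"
  by (simp add: path_edges_def)

lemma path_edges_singleton [simp]: "path_edges [x] = []"
  by (simp add: path_edges_def)

lemma path_edges_Cons_Cons [simp]: "path_edges (x # y # p) = {x, y} # path_edges (y # p)"
proof -
  have "[0..<length (x # y # p) - 1] = 0 # map Suc [0..<length (y # p) - 1]"
    by (simp add: upt_conv_Cons map_Suc_upt del: upt_Suc)
  then show ?thesis by (simp add: path_edges_def)
qed

lemma path_edges_Cons: "p \<noteq> [] \<Longrightarrow> path_edges (x # p) = {x, hd p} # path_edges p"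
  by (cases p) auto

lemma path_edges_append:
  "path_edges (xs @ y # ys) = path_edges (xs @ [y]) @ path_edges (y # ys)"
  by (induction xs rule: induct_list012) auto

lemma path_edges_snoc: "xs \<noteq> [] \<Longrightarrow> path_edges (xs @ [y]) = path_edges xs @ [{last xs, y}]"
  by (induction xs rule: induct_list012) auto

lemma path_edges_map: "path_edges (map h p) = map (image h) (path_edges p)"
  by (induction p rule: induct_list012) auto

lemma path_edges_rev: "path_edges (rev p) = rev (path_edges p)"
proof (induction p rule: induct_list012)
  case (3 x y p)
  have "path_edges (rev (x # y # p)) = path_edges (rev (y # p)) @ [{y, x}]"
    using path_edges_append[of "rev p" y "[x]"] by simp
  then show ?case using 3 by (simp add: insert_commute)
qed auto

lemma mem_path_edges_iff:
  "e \<in> set (path_edges p) \<longleftrightarrow> (\<exists>i. Suc i < length p \<and> e = {p ! i, p ! Suc i})"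
  unfolding path_edges_def by (force simp: less_diff_conv)

lemma path_edge_subset_set: "e \<in> set (path_edges p) \<Longrightarrow> e \<subseteq> set p"
  by (auto simp: mem_path_edges_iff)

lemma path_edge_at_cell:
  assumes "distinct p" "p = xs @ u # ys" "e \<in> set (path_edges p)" "u \<in> e"
  shows "(xs \<noteq> [] \<and> e = {last xs, u}) \<or> (ys \<noteq> [] \<and> e = {u, hd ys})"
proof -
  obtain i where i: "Suc i < length p" "e = {p ! i, p ! Suc i}"
    using assms(3) by (auto simp: mem_path_edges_iff)
  have pu: "p ! length xs = u" "length xs < length p" using assms(2) by auto
  have "u = p ! i \<or> u = p ! Suc i" using i assms(4) by auto
  then show ?thesis
  proof
    assume "u = p ! i"
    then have "i = length xs" using pu i(1) assms(1) nth_eq_iff_index_eq by fastforce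
    then have "ys \<noteq> []" "p ! Suc i = hd ys"
      using i(1) assms(2) by (auto simp: nth_append hd_conv_nth)
    then show ?thesis using i \<open>u = p ! i\<close> by auto
  next
    assume "u = p ! Suc i"
    then have "Suc i = length xs" using pu i(1) assms(1) nth_eq_iff_index_eq by fastforce
    then have "xs \<noteq> []" "i = length xs - 1" by auto
    then have "p ! i = last xs" using assms(2) by (simp add: nth_append last_conv_nth)
    then show ?thesis using i \<open>u = p ! Suc i\<close> \<open>xs \<noteq> []\<close> by auto
  qed
qed

lemma cell_in_path_edge:
  assumes "2 \<le> length p" "a \<in> set p"
  shows "\<exists>e\<in>set (path_edges p). a \<in> e"
proof -
  obtain i where i: "i < length p" "p ! i = a" using assms(2) by (metis in_set_conv_nth)
  show ?thesis
  proof (cases "Suc i < length p")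
    case True
    then have "{p ! i, p ! Suc i} \<in> set (path_edges p)" unfolding mem_path_edges_iff by blast
    then show ?thesis using i by auto
  next
    case False
    then have "Suc (i - 1) < length p" "i = Suc (i - 1)" using i assms(1) by auto
    then have "{p ! (i - 1), p ! i} \<in> set (path_edges p)" unfolding mem_path_edges_iff by metis
    then show ?thesis using i by auto
  qed
qed

lemma is_path_singleton [simp]: "is_path X0 X1 [x] \<longleftrightarrow> x \<in> X0"
  by (simp add: is_path_def)

lemma is_path_Cons_Cons:
  "is_path X0 X1 (x # y # p) \<longleftrightarrow>
     x \<in> X0 \<and> {x, y} \<in> X1 \<and> {x, y} \<notin> set (path_edges (y # p)) \<and> is_path X0 X1 (y # p)"
  by (auto simp: is_path_def)

lemma is_path_Cons:
  "p \<noteq> [] \<Longrightarrow> is_path X0 X1 (x # p) \<longleftrightarrow>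
     x \<in> X0 \<and> {x, hd p} \<in> X1 \<and> {x, hd p} \<notin> set (path_edges p) \<and> is_path X0 X1 p"
  by (cases p) (auto simp: is_path_Cons_Cons)

lemma is_path_rev [simp]: "is_path X0 X1 (rev p) \<longleftrightarrow> is_path X0 X1 p"
  by (auto simp: is_path_def path_edges_rev)

lemma is_path_mono: "is_path X0 X1 p \<Longrightarrow> X0 \<subseteq> Y0 \<Longrightarrow> X1 \<subseteq> Y1 \<Longrightarrow> is_path Y0 Y1 p"
  unfolding is_path_def by blast

lemma is_path_map_iff:
  assumes "inj h"
  shows "is_path (h ` X0) (image h ` X1) (map h p) \<longleftrightarrow> is_path X0 X1 p"
proof -
  have inj_image: "inj (image h)" using inj_on_image_Pow[OF assms] by simp
  then have "distinct (map (image h) (path_edges p)) \<longleftrightarrow> distinct (path_edges p)"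
    by (simp add: distinct_map inj_on_subset[OF inj_image])
  then show ?thesis
    unfolding is_path_def path_edges_map
    by (simp add: inj_image_subset_iff[OF assms] inj_image_subset_iff[OF inj_image])
qed

lemma is_path_appendD:
  "is_path X0 X1 (xs @ y # ys) \<Longrightarrow> is_path X0 X1 (xs @ [y]) \<and> is_path X0 X1 (y # ys)"
  unfolding is_path_def path_edges_append[of xs y ys] by auto

lemma is_path_prefix:
  assumes "is_path X0 X1 (p @ r)" "p \<noteq> []"
  shows "is_path X0 X1 p"
proof (cases r)
  case (Cons z r')
  have "p @ r = butlast p @ last p # r" using assms(2) by simp
  then show ?thesis using assms is_path_appendD by (metis append_butlast_last_id)
qed (use assms in simp)

lemma is_path_suffix: "is_path X0 X1 (p @ r) \<Longrightarrow> r \<noteq> [] \<Longrightarrow> is_path X0 X1 r"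
  using is_path_prefix[of X0 X1 "rev r" "rev p"] by (metis is_path_rev rev_append rev_is_Nil_conv)

lemma is_path_drop_take:
  assumes "is_path X0 X1 p" "i \<le> j" "j < length p"
  shows "is_path X0 X1 (drop i (take (Suc j) p))"
proof -
  have "take (Suc j) p \<noteq> []" using assms(3) by (cases p) auto
  then have "is_path X0 X1 (take (Suc j) p)"
    using is_path_prefix[of X0 X1 "take (Suc j) p" "drop (Suc j) p"] assms(1) by simp
  moreover have "take i (take (Suc j) p) = take i p" using assms(2) by (simp add: min_def)
  then have "take (Suc j) p = take i p @ drop i (take (Suc j) p)" by (metis append_take_drop_id)
  moreover have "drop i (take (Suc j) p) \<noteq> []" using assms by simp
  ultimately show ?thesis using is_path_suffix by metis
qed

lemma is_path_append:
  assumes "is_path X0 X1 (xs @ [y])" "is_path X0 X1 (y # ys)"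
    and "set xs \<inter> set (y # ys) = {}" and "\<forall>e\<in>X1. card e = 2"
  shows "is_path X0 X1 (xs @ y # ys)"
proof -
  have "e \<notin> set (path_edges (y # ys))" if e: "e \<in> set (path_edges (xs @ [y]))" for e
  proof
    assume "e \<in> set (path_edges (y # ys))"
    then have "e \<subseteq> {y}"
      using e path_edge_subset_set assms(3) by fastforce
    moreover have "card e = 2" using e assms(1,4) unfolding is_path_def by auto
    ultimately show False using card_mono[of "{y}" e] by auto
  qed
  then show ?thesis using assms(1,2) unfolding is_path_def path_edges_append[of xs y ys]
    by auto
qed

lemma valency_1_edge_unique:
  assumes "valency E a = 1" "e \<in> E" "a \<in> e" "e' \<in> E" "a \<in> e'"
  shows "e = e'"
proof -
  obtain e0 where e0: "{e \<in> E. a \<in> e} = {e0}"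
    using assms(1) by (auto simp: valency_def card_1_singleton_iff)
  have "e \<in> {e \<in> E. a \<in> e}" "e' \<in> {e \<in> E. a \<in> e}" using assms(2-5) by simp_all
  then show ?thesis unfolding e0 by simp
qed

lemma valency_1_path_end:
  assumes "is_path X0 X1 p" "z \<in> set p" "valency X1 z = 1"
  shows "z = hd p \<or> z = last p"
proof (rule ccontr)
  assume "\<not> (z = hd p \<or> z = last p)"
  moreover obtain P R where p: "p = P @ z # R" using assms(2) by (meson split_list)
  ultimately have "P \<noteq> []" "R \<noteq> []" by auto
  then have in_edges: "{last P, z} \<in> set (path_edges (P @ [z]))" "{z, hd R} \<in> set (path_edges (z # R))"
    by (auto simp: path_edges_snoc path_edges_Cons)
  have disj: "set (path_edges (P @ [z])) \<inter> set (path_edges (z # R)) = {}"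
    and sub: "set (path_edges (P @ [z])) \<union> set (path_edges (z # R)) \<subseteq> X1"
    using assms(1) unfolding is_path_def p path_edges_append[of P z R] by auto
  have "{last P, z} = {z, hd R}" using valency_1_edge_unique[OF assms(3)] in_edges sub by blast
  then show False using disj in_edges by auto
qed

lemma Qcell_valency_1:
  assumes "is_path X0 X1 \<gamma>" "2 \<le> length \<gamma>" "a \<in> set \<gamma>" "valency X1 a = 1"
  shows "Qcell X1 q \<gamma> a = 1"
proof -
  obtain e where e: "e \<in> set (path_edges \<gamma>)" "a \<in> e" using cell_in_path_edge[OF assms(2,3)] by blast
  then have "e \<in> X1" using assms(1) by (auto simp: is_path_def)
  then have "{\<epsilon> \<in> X1. a \<in> \<epsilon> \<and> \<epsilon> \<notin> set (path_edges \<gamma>)} = {}"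
    using valency_1_edge_unique[OF assms(4)] e by blast
  then show ?thesis unfolding Qcell_def by (metis prod.empty)
qed

section \<open>Trees\<close>

lemma is_tree_with_paths:
  assumes "is_graph C E"
    and path: "\<And>x y. x \<in> C \<Longrightarrow> y \<in> C \<Longrightarrow>
      is_path C E (g x y) \<and> hd (g x y) = x \<and> last (g x y) = y"
    and unique: "\<And>x y p. x \<in> C \<Longrightarrow> y \<in> C \<Longrightarrow> is_path C E p \<Longrightarrow> hd p = x \<Longrightarrow> last p = y \<Longrightarrow>
      p = g x y"
  shows "is_tree C E" and "x \<in> C \<Longrightarrow> y \<in> C \<Longrightarrow> gpath C E x y = g x y"
proof -
  have ex1: "\<exists>!p. is_path C E p \<and> hd p = x \<and> last p = y" if "x \<in> C" "y \<in> C" for x y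
  proof (rule ex1I)
    show "is_path C E (g x y) \<and> hd (g x y) = x \<and> last (g x y) = y" using path[OF that] .
  qed (use unique[OF that] in blast)
  then show "is_tree C E" using assms(1) by (simp add: is_tree_def)
  show "gpath C E x y = g x y" if "x \<in> C" "y \<in> C"
    unfolding gpath_def using ex1[OF that] path[OF that] by (rule the1_equality)
qed

locale tree =
  fixes C :: "'a set" and E :: "'a set set"
  assumes is_tree: "is_tree C E"
begin

abbreviation gp :: "'a \<Rightarrow> 'a \<Rightarrow> 'a list" where "gp \<equiv> gpath C E"

lemma finite_cells: "finite C" and finite_edges: "finite E"
  using is_tree by (auto simp: is_tree_def is_graph_def)

lemma edge_subset: "e \<in> E \<Longrightarrow> e \<subseteq> C" and card_edge: "e \<in> E \<Longrightarrow> card e = 2"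
  using is_tree by (auto simp: is_tree_def is_graph_def)

lemma edge_doubleton: "e \<in> E \<Longrightarrow> \<exists>a b. a \<noteq> b \<and> e = {a, b}"
  using card_edge card_2_iff by metis

lemma edge_neq: "{a, b} \<in> E \<Longrightarrow> a \<noteq> b"
  using card_edge by fastforce

lemma edge_cells: "{a, b} \<in> E \<Longrightarrow> a \<in> C \<and> b \<in> C"
  using edge_subset by blast

lemma path_cells: "is_path C E p \<Longrightarrow> set p \<subseteq> C"
  by (simp add: is_path_def)

lemma gpath_spec: "x \<in> C \<Longrightarrow> y \<in> C \<Longrightarrow> is_path C E (gp x y) \<and> hd (gp x y) = x \<and> last (gp x y) = y"
  unfolding gpath_def using is_tree theI'[of "\<lambda>p. is_path C E p \<and> hd p = x \<and> last p = y"]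
  by (auto simp: is_tree_def)

lemma is_path_gpath: "x \<in> C \<Longrightarrow> y \<in> C \<Longrightarrow> is_path C E (gp x y)"
  and hd_gpath [simp]: "x \<in> C \<Longrightarrow> y \<in> C \<Longrightarrow> hd (gp x y) = x"
  and last_gpath [simp]: "x \<in> C \<Longrightarrow> y \<in> C \<Longrightarrow> last (gp x y) = y"
  using gpath_spec by auto

lemma gpath_unique: "is_path C E p \<Longrightarrow> hd p = x \<Longrightarrow> last p = y \<Longrightarrow> gp x y = p"
proof -
  assume p: "is_path C E p" "hd p = x" "last p = y"
  then have "p \<noteq> []" "x \<in> C" "y \<in> C"
    using path_cells[OF p(1)] by (auto simp: is_path_def intro!: hd_in_set last_in_set)
  then have "\<exists>!p. is_path C E p \<and> hd p = x \<and> last p = y" using is_tree by (auto simp: is_tree_def)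
  then show ?thesis unfolding gpath_def using p the1_equality by blast
qed

lemma gpath_not_Nil: "x \<in> C \<Longrightarrow> y \<in> C \<Longrightarrow> gp x y \<noteq> []"
  using gpath_spec by (auto simp: is_path_def)

lemma start_in_gpath: "x \<in> C \<Longrightarrow> y \<in> C \<Longrightarrow> x \<in> set (gp x y)"
  and end_in_gpath: "x \<in> C \<Longrightarrow> y \<in> C \<Longrightarrow> y \<in> set (gp x y)"
  by (metis gpath_not_Nil hd_gpath hd_in_set, metis gpath_not_Nil last_gpath last_in_set)

lemma set_gpath: "x \<in> C \<Longrightarrow> y \<in> C \<Longrightarrow> set (gp x y) \<subseteq> C"
  using gpath_spec path_cells by blast

lemma path_edges_gpath: "x \<in> C \<Longrightarrow> y \<in> C \<Longrightarrow> set (path_edges (gp x y)) \<subseteq> E"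
  using is_path_gpath by (simp add: is_path_def)

lemma gpath_refl: "x \<in> C \<Longrightarrow> gp x x = [x]"
  by (rule gpath_unique) auto

lemma gpath_edge: "{a, b} \<in> E \<Longrightarrow> gp a b = [a, b]"
  using edge_cells by (intro gpath_unique) (auto simp: is_path_Cons_Cons)

lemma gpath_drop_take:
  assumes "is_path C E p" "i \<le> j" "j < length p"
  shows "gp (p ! i) (p ! j) = drop i (take (Suc j) p)"
  using assms is_path_drop_take[OF assms]
  by (intro gpath_unique) (auto simp: hd_drop_conv_nth last_conv_nth)

lemma distinct_path: "is_path C E p \<Longrightarrow> distinct p"
proof (rule ccontr)
  assume p: "is_path C E p" "\<not> distinct p"
  then obtain i j where ij: "i < j" "j < length p" "p ! i = p ! j"
    by (metis distinct_conv_nth linorder_neqE_nat)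
  have "p ! i \<in> C" using path_cells[OF p(1)] ij by (meson less_trans nth_mem subsetD)
  then have "drop i (take (Suc j) p) = [p ! i]"
    using gpath_drop_take[OF p(1), of i j] ij gpath_refl by simp
  then have "length (drop i (take (Suc j) p)) = 1" by simp
  then show False using ij by simp
qed

lemma distinct_gpath: "x \<in> C \<Longrightarrow> y \<in> C \<Longrightarrow> distinct (gp x y)"
  using gpath_spec distinct_path by blast

lemma gpath_rev: "x \<in> C \<Longrightarrow> y \<in> C \<Longrightarrow> gp y x = rev (gp x y)"
  using gpath_spec gpath_not_Nil by (intro gpath_unique) (auto simp: hd_rev last_rev)

lemma gpath_split:
  assumes "x \<in> C" "y \<in> C" "gp x y = xs @ z # ys"
  shows "gp x z = xs @ [z]" and "gp z y = z # ys"
proof -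
  have p: "is_path C E (xs @ z # ys)" "hd (xs @ z # ys) = x" "last (xs @ z # ys) = y"
    using gpath_spec[OF assms(1,2)] assms(3) by auto
  have "is_path C E (xs @ [z])" "is_path C E (z # ys)" using is_path_appendD p(1) by metis+
  moreover have "hd (xs @ [z]) = x" using p(2) by (cases xs) auto
  moreover have "last (z # ys) = y" using p(3) by (cases ys) auto
  ultimately show "gp x z = xs @ [z]" "gp z y = z # ys"
    using gpath_unique by (metis last_snoc list.sel(1))+
qed

lemma edge_in_path_edges:
  assumes "is_path C E p" "{a, b} \<in> E" "a \<in> set p" "b \<in> set p"
  shows "{a, b} \<in> set (path_edges p)"
proof -
  have consecutive: "{p ! i, p ! j} \<in> set (path_edges p)"
    if "i < j" "j < length p" "{p ! i, p ! j} \<in> E" for i j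
  proof -
    have "drop i (take (Suc j) p) = [p ! i, p ! j]"
      using gpath_drop_take[OF assms(1), of i j] that gpath_edge by simp
    then have "length (drop i (take (Suc j) p)) = 2" by simp
    then have "j = Suc i" using that by simp
    then show ?thesis using that by (auto simp: mem_path_edges_iff)
  qed
  obtain i j where ij: "i < length p" "p ! i = a" "j < length p" "p ! j = b"
    using assms(3,4) by (metis in_set_conv_nth)
  have "i \<noteq> j" using ij assms(2) edge_neq by blast
  then consider "i < j" | "j < i" by linarith
  then show ?thesis
  proof cases
    case 1
    then show ?thesis using consecutive[of i j] ij assms(2) by simp
  next
    case 2
    then show ?thesis using consecutive[of j i] ij assms(2) by (simp add: insert_commute)
  qed
qed

lemma gpath_append:
  assumes "x \<in> C" "y \<in> C" "z \<in> C" "set (gp x y) \<inter> set (gp y z) = {y}"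
  shows "gp x z = gp x y @ tl (gp y z)"
proof -
  obtain xs where xs: "gp x y = xs @ [y]"
    using gpath_spec[OF assms(1,2)] gpath_not_Nil[OF assms(1,2)] by (metis append_butlast_last_id)
  obtain ys where ys: "gp y z = y # ys"
    using gpath_spec[OF assms(2,3)] gpath_not_Nil[OF assms(2,3)] by (metis list.collapse)
  have "y \<notin> set xs" using distinct_gpath[OF assms(1,2)] xs by simp
  then have "set xs \<inter> set (y # ys) = {}" using assms(4) xs ys by auto
  then have "is_path C E (xs @ y # ys)"
    using is_path_append[of C E xs y ys] gpath_spec[OF assms(1,2)] gpath_spec[OF assms(2,3)] xs ys card_edge
    by auto
  moreover have "hd (xs @ y # ys) = x" using gpath_spec[OF assms(1,2)] xs by (cases xs) auto
  moreover have "last (xs @ y # ys) = z" using gpath_spec[OF assms(2,3)] ys by (cases ys) auto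
  ultimately show ?thesis using gpath_unique xs ys by auto
qed

lemma gpath_turn_back:
  assumes "x \<in> C" "y \<in> C" "z \<in> C" "y \<notin> set (gp x z)"
  shows "\<exists>r w s. gp x y = r @ [w, y] \<and> gp y z = y # w # s"
proof -
  have "set (gp x y) \<inter> set (gp y z) \<noteq> {y}"
  proof
    assume "set (gp x y) \<inter> set (gp y z) = {y}"
    then have "gp x z = gp x y @ tl (gp y z)" using gpath_append assms(1-3) by blast
    then show False using assms(4) end_in_gpath[OF assms(1,2)] by simp
  qed
  then obtain w where w: "w \<noteq> y" "w \<in> set (gp x y)" "w \<in> set (gp y z)"
    using end_in_gpath[OF assms(1,2)] start_in_gpath[OF assms(2,3)] by blast
  obtain xs ys where 1: "gp x y = xs @ w # ys" using w(2) by (meson split_list)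
  obtain us vs where 2: "gp y z = us @ w # vs" using w(3) by (meson split_list)
  have wC: "w \<in> C" using w(2) set_gpath[OF assms(1,2)] by blast
  have "us @ [w] = rev ys @ [w]"
    using gpath_split(2)[OF assms(1,2) 1] gpath_split(1)[OF assms(2,3) 2] gpath_rev[OF wC assms(2)]
    by simp
  then have ys: "ys = rev us" by simp
  have "hd (us @ [w]) = y" using gpath_split(1)[OF assms(2,3) 2] assms(2) wC by (metis hd_gpath)
  then obtain us' where us: "us = y # us'" using w(1) by (cases us) auto
  obtain w' L where L: "us' @ [w] = w' # L" by (cases "us' @ [w]") auto
  have "gp y z = y # w' # (L @ vs)" using 2 us L by simp
  moreover have "w # ys = rev L @ [w', y]"
  proof -
    have "w # ys = rev (us' @ [w]) @ [y]" using ys us by simp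
    then show ?thesis using L by simp
  qed
  then have "gp x y = (xs @ rev L) @ [w', y]" using 1 by simp
  ultimately show ?thesis by blast
qed

lemma length_gpath:
  assumes "x \<in> C" "y \<in> C" "x \<noteq> y"
  shows "2 \<le> length (gp x y)"
proof (rule ccontr)
  assume "\<not> 2 \<le> length (gp x y)"
  moreover have "0 < length (gp x y)" using gpath_not_Nil[OF assms(1,2)] by simp
  ultimately have "length (gp x y) = 1" by linarith
  then have "hd (gp x y) = last (gp x y)" by (cases "gp x y") auto
  then show False using assms by simp
qed

lemma path_edges_gpath_trans:
  assumes "x \<in> C" "y \<in> C" "z \<in> C"
  shows "set (path_edges (gp x z)) \<subseteq> set (path_edges (gp x y)) \<union> set (path_edges (gp y z))"
proof -
  let ?P = "\<lambda>u. u \<notin> set (gp y z)"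
  define P0 where "P0 = takeWhile ?P (gp x y)"
  have "dropWhile ?P (gp x y) \<noteq> []"
    using end_in_gpath[OF assms(1,2)] start_in_gpath[OF assms(2,3)] by (auto simp: dropWhile_eq_Nil_conv)
  then obtain w R where R: "dropWhile ?P (gp x y) = w # R" by (cases "dropWhile ?P (gp x y)") auto
  have xy: "gp x y = P0 @ w # R" using R takeWhile_dropWhile_id unfolding P0_def by metis
  have "w \<in> set (gp y z)" using hd_dropWhile[of ?P "gp x y"] R by auto
  then obtain U S where yz: "gp y z = U @ w # S" by (meson split_list)
  have wC: "w \<in> C" using yz set_gpath[OF assms(2,3)] by auto
  have "set (gp x w) \<inter> set (gp w z) = {w}"
    unfolding gpath_split(1)[OF assms(1,2) xy] gpath_split(2)[OF assms(2,3) yz]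
    using set_takeWhileD yz unfolding P0_def by fastforce
  then have "gp x z = P0 @ w # S"
    using gpath_append[OF assms(1) wC assms(3)] gpath_split[OF assms(1,2) xy]
      gpath_split[OF assms(2,3) yz] by simp
  then show ?thesis
    unfolding xy yz using path_edges_append[of P0 w S] path_edges_append[of P0 w R]
      path_edges_append[of U w S] by auto
qed

lemma incident_edge_unique_cell:
  assumes "is_path C E p" "\<epsilon> \<in> E" "\<epsilon> \<notin> set (path_edges p)"
    and "a \<in> set p" "b \<in> set p" "a \<in> \<epsilon>" "b \<in> \<epsilon>"
  shows "a = b"
proof (rule ccontr)
  assume "a \<noteq> b"
  then have "\<epsilon> = {a, b}" using card_edge[OF assms(2)] assms(6,7) by (auto simp: card_2_iff)
  then show False using edge_in_path_edges[OF assms(1) _ assms(4,5)] assms(2,3) by simp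
qed

lemma prod_incident_edges:
  assumes "is_path C E \<gamma>"
  shows "(\<Prod>\<epsilon>\<in>incident_edges E \<gamma>. q_path q \<epsilon> \<gamma>) = (\<Prod>z\<in>set \<gamma>. Qcell E q \<gamma> z)"
proof -
  let ?S = "\<lambda>z. {\<epsilon> \<in> E. z \<in> \<epsilon> \<and> \<epsilon> \<notin> set (path_edges \<gamma>)}"
  have "incident_edges E \<gamma> = (\<Union>z\<in>set \<gamma>. ?S z)"
    by (auto simp: incident_edges_def)
  then have "(\<Prod>\<epsilon>\<in>incident_edges E \<gamma>. q_path q \<epsilon> \<gamma>) = (\<Prod>z\<in>set \<gamma>. \<Prod>\<epsilon>\<in>?S z. q_path q \<epsilon> \<gamma>)"
    using incident_edge_unique_cell[OF assms] finite_edges by (auto intro!: prod.UNION_disjoint)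
  also have "\<dots> = (\<Prod>z\<in>set \<gamma>. Qcell E q \<gamma> z)"
  proof (rule prod.cong[OF refl])
    fix z assume z: "z \<in> set \<gamma>"
    have "(THE u. u \<in> set \<gamma> \<and> u \<in> \<epsilon>) = z" if "\<epsilon> \<in> ?S z" for \<epsilon>
      using incident_edge_unique_cell[OF assms] that z by (intro the_equality) blast+
    then show "(\<Prod>\<epsilon>\<in>?S z. q_path q \<epsilon> \<gamma>) = Qcell E q \<gamma> z"
      unfolding Qcell_def q_path_def by (intro prod.cong) auto
  qed
  finally show ?thesis .
qed

lemma path_closed_subtree:
  assumes sub: "C' \<subseteq> C" "E' \<subseteq> E" "\<forall>e\<in>E'. e \<subseteq> C'"
    and closed: "\<forall>x\<in>C'. \<forall>y\<in>C'. set (path_edges (gp x y)) \<subseteq> E'"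
  shows "is_tree C' E'" and "x \<in> C' \<Longrightarrow> y \<in> C' \<Longrightarrow> gpath C' E' x y = gp x y"
proof -
  have cells: "set (gp x y) \<subseteq> C'" if "x \<in> C'" "y \<in> C'" for x y
  proof (cases "x = y")
    case True
    then show ?thesis using gpath_refl that sub(1) by auto
  next
    case False
    then show ?thesis
      using cell_in_path_edge[OF length_gpath] closed sub that by blast
  qed
  have "is_graph C' E'"
    using finite_cells finite_edges sub card_edge unfolding is_graph_def
    by (auto intro: finite_subset)
  moreover have "is_path C' E' (gp x y) \<and> hd (gp x y) = x \<and> last (gp x y) = y"
    if "x \<in> C'" "y \<in> C'" for x y
  proof -
    have "x \<in> C" "y \<in> C" using that sub(1) by auto
    then show ?thesis
      using is_path_gpath[of x y] cells[OF that] closed that unfolding is_path_def by auto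
  qed
  moreover have "p = gp x y" if "is_path C' E' p" "hd p = x" "last p = y" for x y p
    using gpath_unique is_path_mono[OF that(1) sub(1,2)] that by simp
  ultimately show "is_tree C' E'" "x \<in> C' \<Longrightarrow> y \<in> C' \<Longrightarrow> gpath C' E' x y = gp x y"
    using is_tree_with_paths[of C' E' gp] by blast+
qed

lemma image_tree:
  assumes h: "inj h"
  shows "is_tree (h ` C) (image h ` E)"
    and "x \<in> C \<Longrightarrow> y \<in> C \<Longrightarrow> gpath (h ` C) (image h ` E) (h x) (h y) = map h (gp x y)"
proof -
  let ?g = "\<lambda>x' y'. map h (gp (inv h x') (inv h y'))"
  have "is_graph (h ` C) (image h ` E)"
    using finite_cells finite_edges edge_subset card_edge h unfolding is_graph_def
    by (auto simp: card_image inj_on_subset image_mono)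
  moreover have "is_path (h ` C) (image h ` E) (?g x' y') \<and> hd (?g x' y') = x' \<and> last (?g x' y') = y'"
    if "x' \<in> h ` C" "y' \<in> h ` C" for x' y'
    using that gpath_spec gpath_not_Nil is_path_map_iff[OF h]
    by (auto simp: hd_map last_map inv_f_f[OF h])
  moreover have "p' = ?g x' y'"
    if x': "x' \<in> h ` C" and y': "y' \<in> h ` C" and p': "is_path (h ` C) (image h ` E) p'"
      and ends: "hd p' = x'" "last p' = y'" for x' y' p'
  proof -
    have "set p' \<subseteq> h ` C" using p' by (simp add: is_path_def)
    then have "map (h \<circ> inv h) p' = p'" by (intro map_idI) (auto simp: f_inv_into_f)
    then have p'_eq: "p' = map h (map (inv h) p')" by simp
    then have "is_path C E (map (inv h) p')" using p' is_path_map_iff[OF h] by metis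
    moreover have "p' \<noteq> []" using p' by (simp add: is_path_def)
    ultimately have "gp (inv h x') (inv h y') = map (inv h) p'"
      using ends by (intro gpath_unique) (auto simp: hd_map last_map)
    then show ?thesis using p'_eq by simp
  qed
  ultimately show "is_tree (h ` C) (image h ` E)"
    and "x \<in> C \<Longrightarrow> y \<in> C \<Longrightarrow> gpath (h ` C) (image h ` E) (h x) (h y) = map h (gp x y)"
    using is_tree_with_paths[of "h ` C" "image h ` E" ?g] by (auto simp: inv_f_f[OF h])
qed

context
  fixes v l
  assumes v: "v \<in> C" and l: "l \<notin> C"
begin

lemma leaf_edge: "e \<in> insert {v, l} E \<Longrightarrow> l \<in> e \<Longrightarrow> e = {v, l}"
  using edge_subset l by blast

lemma path_avoiding_leaf:
  assumes "is_path (insert l C) (insert {v, l} E) p" "l \<notin> set p"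
  shows "is_path C E p"
proof -
  have "e \<in> E" if "e \<in> set (path_edges p)" for e
    using that assms path_edge_subset_set[OF that] unfolding is_path_def by auto
  then show ?thesis using assms unfolding is_path_def by auto
qed

lemma leaf_not_in_tail:
  assumes "is_path (insert l C) (insert {v, l} E) (l # p)"
  shows "l \<notin> set p"
proof
  assume lp: "l \<in> set p"
  then obtain a r where p: "p = a # r" by (cases p) auto
  have "{l, a} \<in> insert {v, l} E" "{l, a} \<notin> set (path_edges p)"
    using assms unfolding p by (auto simp: is_path_Cons_Cons)
  then have la: "{l, a} = {v, l}" "{l, a} \<notin> set (path_edges p)"
    using leaf_edge by auto
  show False
  proof (cases r)
    case Nil
    then show False using la(1) lp p v l by (auto simp: doubleton_eq_iff)
  next
    case (Cons b r')
    then obtain e where "e \<in> set (path_edges p)" "l \<in> e"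
      using cell_in_path_edge[of p l] lp p by auto
    moreover have "is_path (insert l C) (insert {v, l} E) p"
      using assms p by (simp add: is_path_Cons_Cons)
    ultimately have "e = {v, l}" using leaf_edge by (auto simp: is_path_def)
    then show False using la \<open>e \<in> set (path_edges p)\<close> by simp
  qed
qed

lemma path_from_leaf:
  assumes "is_path (insert l C) (insert {v, l} E) p" "hd p = l" "last p = y"
  shows "p = (if y = l then [l] else l # gp v y)"
proof -
  obtain p' where p: "p = l # p'" using assms by (cases p) (auto simp: is_path_def)
  show ?thesis
  proof (cases p')
    case Nil
    then show ?thesis using p assms by simp
  next
    case (Cons a r)
    have l_tail: "l \<notin> set p'" using leaf_not_in_tail assms p by simp
    have "{l, a} \<in> insert {v, l} E" and p'_path: "is_path (insert l C) (insert {v, l} E) p'"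
      using assms unfolding p Cons by (auto simp: is_path_Cons_Cons)
    then have "{l, a} = {v, l}" using leaf_edge by simp
    then have "hd p' = v" using v l Cons by (auto simp: doubleton_eq_iff)
    moreover have "last p' = y" using assms(3) p Cons by simp
    moreover have "is_path C E p'" using path_avoiding_leaf[OF p'_path l_tail] .
    moreover have "y \<in> set p'" using \<open>last p' = y\<close> Cons last_in_set by blast
    then have "y \<noteq> l" using l_tail by blast
    ultimately show ?thesis using gpath_unique p by auto
  qed
qed

lemma leaf_valency: "valency (insert {v, l} E) l = 1"
proof -
  have "{e \<in> insert {v, l} E. l \<in> e} = {{v, l}}" using leaf_edge by auto
  then show ?thesis by (simp add: valency_def)
qed

lemma is_path_leaf_gpath:
  assumes "z \<in> C"
  shows "is_path (insert l C) (insert {v, l} E) (l # gp v z)"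
proof -
  have "{l, v} \<notin> set (path_edges (gp v z))"
    using path_edges_gpath[OF v assms] l v edge_subset by blast
  moreover have "is_path (insert l C) (insert {v, l} E) (gp v z)"
    using is_path_mono[OF is_path_gpath[OF v assms]] by blast
  ultimately show ?thesis using v assms by (simp add: is_path_Cons gpath_not_Nil insert_commute)
qed

lemma add_leaf:
  shows "is_tree (insert l C) (insert {v, l} E)"
    and "x \<in> C \<Longrightarrow> y \<in> C \<Longrightarrow> gpath (insert l C) (insert {v, l} E) x y = gp x y"
proof -
  let ?C = "insert l C" and ?E = "insert {v, l} E"
  let ?g = "\<lambda>x y. if x = l then (if y = l then [l] else l # gp v y)
    else if y = l then rev (l # gp v x) else gp x y"
  have "v \<noteq> l" using v l by blast
  then have "is_graph ?C ?E"
    using finite_cells finite_edges edge_subset card_edge v unfolding is_graph_def by auto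
  moreover have "is_path ?C ?E (?g x y) \<and> hd (?g x y) = x \<and> last (?g x y) = y"
    if xy: "x \<in> ?C" "y \<in> ?C" for x y
  proof -
    consider "x = l" "y = l" | "x = l" "y \<in> C" | "x \<in> C" "y = l" | "x \<in> C" "y \<in> C"
      using xy by blast
    then show ?thesis
    proof cases
      case 2
      then show ?thesis using is_path_leaf_gpath[of y] gpath_not_Nil[OF v] v l by auto
    next
      case 3
      then show ?thesis using is_path_leaf_gpath[of x] gpath_not_Nil[OF v] v l
        by (auto simp: hd_rev last_rev simp del: rev.simps)
    next
      case 4
      moreover have "is_path ?C ?E (gp x y)"
        using is_path_mono[OF is_path_gpath[OF 4]] by blast
      ultimately show ?thesis using l by auto
    qed simp
  qed
  moreover have "p = ?g x y" if "x \<in> ?C" "y \<in> ?C" "is_path ?C ?E p" "hd p = x" "last p = y" for x y p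
  proof -
    consider "x = l" | "x \<noteq> l" "y = l" | "x \<noteq> l" "y \<noteq> l" by blast
    then show ?thesis
    proof cases
      case 1
      then show ?thesis using path_from_leaf that by simp
    next
      case 2
      have "p \<noteq> []" using that(3) by (simp add: is_path_def)
      then have "rev p = l # gp v x"
        using path_from_leaf[of "rev p" x] that 2 by (simp add: hd_rev last_rev)
      then show ?thesis using 2 by (metis rev_rev_ident)
    next
      case 3
      then have "l \<notin> set p" using valency_1_path_end[OF that(3) _ leaf_valency] that(4,5) by auto
      then have "is_path C E p" using path_avoiding_leaf that(3) by blast
      then show ?thesis using gpath_unique that 3 by simp
    qed
  qed
  ultimately show "is_tree ?C ?E" "x \<in> C \<Longrightarrow> y \<in> C \<Longrightarrow> gpath ?C ?E x y = gp x y"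
    using is_tree_with_paths[of ?C ?E ?g] l by auto
qed

end

end

section \<open>Decomposition of M into leaf weights\<close>

definition leaf_weight :: "'a set \<Rightarrow> 'a set set \<Rightarrow> ('a set \<Rightarrow> 'a \<Rightarrow> int) \<Rightarrow> 'a \<Rightarrow> int" where
  "leaf_weight C E q \<alpha> = - (\<Sum>v\<in>C - {\<alpha>}.
     (\<Prod>\<epsilon>\<in>incident_edges E (gpath C E v \<alpha>). q_path q \<epsilon> (gpath C E v \<alpha>)) * (int (valency E v) - 2))"

lemma prod_lessThan_ends:
  fixes F :: "nat \<Rightarrow> 'b::comm_monoid_mult"
  assumes "2 \<le> n"
  shows "(\<Prod>i<n. F i) = F 0 * (\<Prod>i\<in>{0<..<n - 1}. F i) * F (n - 1)"
proof -
  have "{..<n} = insert 0 (insert (n - 1) {0<..<n - 1})" using assms by auto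
  then show ?thesis using assms by (simp add: algebra_simps)
qed

lemma (in tree) prod_incident_edges_leaves:
  assumes "a \<in> C" "b \<in> C" "a \<noteq> b" "valency E a = 1" "valency E b = 1"
  shows "(\<Prod>\<epsilon>\<in>incident_edges E (gp a b). q_path q \<epsilon> (gp a b)) = Qstar E q (gp a b)"
proof -
  let ?g = "gp a b"
  have len: "2 \<le> length ?g" using length_gpath[OF assms(1-3)] .
  have ends: "?g ! 0 = a" "?g ! (length ?g - 1) = b"
    using gpath_not_Nil[OF assms(1,2)] hd_gpath[OF assms(1,2)] last_gpath[OF assms(1,2)]
    by (simp_all add: hd_conv_nth last_conv_nth)
  have "(\<Prod>\<epsilon>\<in>incident_edges E ?g. q_path q \<epsilon> ?g) = (\<Prod>z\<in>set ?g. Qcell E q ?g z)"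
    using prod_incident_edges[OF is_path_gpath[OF assms(1,2)]] .
  also have "\<dots> = (\<Prod>i<length ?g. Qcell E q ?g (?g ! i))"
  proof -
    have "set ?g = (\<lambda>i. ?g ! i) ` {..<length ?g}" by (auto simp: in_set_conv_nth image_def)
    moreover have "inj_on (\<lambda>i. ?g ! i) {..<length ?g}"
      using distinct_gpath[OF assms(1,2)] by (auto simp: inj_on_def nth_eq_iff_index_eq)
    ultimately show ?thesis by (simp add: prod.reindex)
  qed
  also have "\<dots> = Qcell E q ?g a * Qstar E q ?g * Qcell E q ?g b"
    unfolding Qstar_def prod_lessThan_ends[OF len] ends ..
  also have "Qcell E q ?g a = 1"
    using Qcell_valency_1[OF is_path_gpath[OF assms(1,2)] len] assms(4) start_in_gpath[OF assms(1,2)]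
    by blast
  also have "Qcell E q ?g b = 1"
    using Qcell_valency_1[OF is_path_gpath[OF assms(1,2)] len] assms(5) end_in_gpath[OF assms(1,2)]
    by blast
  finally show ?thesis by simp
qed

lemma sum_off_diagonal:
  assumes "finite S"
  shows "(\<Sum>(a, b)\<in>{(a, b) \<in> S \<times> S. a \<noteq> b}. h a b) = (\<Sum>b\<in>S. \<Sum>a\<in>S - {b}. h a b)"
proof -
  have "inj_on (\<lambda>(b, a). (a, b)) (Sigma S (\<lambda>b. S - {b}))" by (auto simp: inj_on_def)
  moreover have "{(a, b) \<in> S \<times> S. a \<noteq> b} = (\<lambda>(b, a). (a, b)) ` Sigma S (\<lambda>b. S - {b})" by auto
  ultimately have "(\<Sum>(a, b)\<in>{(a, b) \<in> S \<times> S. a \<noteq> b}. h a b) = (\<Sum>(b, a)\<in>Sigma S (\<lambda>b. S - {b}). h a b)"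
    by (rule sum.reindex_cong) auto
  then show ?thesis using assms by (simp add: sum.Sigma)
qed

lemma Mval_eq_sum_leaf_weight:
  assumes tree: "is_tree (V \<union> A) E" and disjoint: "V \<inter> A = {}"
    and arrow_valency: "\<forall>a\<in>A. valency E a = 1" and unit_weights: "\<forall>a\<in>A - zero_arrows A f. f a = 1"
  shows "Mval V A E f q = (\<Sum>\<alpha>\<in>A - zero_arrows A f. leaf_weight (V \<union> A) E q \<alpha>)
     - Iform V A E f q (A - zero_arrows A f) (A - zero_arrows A f)"
proof -
  interpret tree "V \<union> A" E by unfold_locales (rule tree)
  let ?A0 = "zero_arrows A f" and ?A1 = "A - zero_arrows A f"
  let ?x = "\<lambda>v \<alpha>. (\<Prod>\<epsilon>\<in>incident_edges E (gp v \<alpha>). q_path q \<epsilon> (gp v \<alpha>))"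
  let ?t = "\<lambda>v \<alpha>. ?x v \<alpha> * (int (valency E v) - 2)"
  have fin: "finite ?A1" "finite (V \<union> ?A0)" using finite_cells by (auto simp: zero_arrows_def)
  have A0: "?A0 \<subseteq> A" by (auto simp: zero_arrows_def)
  have "Mval V A E f q = - (\<Sum>v\<in>V \<union> ?A0. \<Sum>\<alpha>\<in>?A1. ?t v \<alpha>)"
    unfolding Mval_def Ncoef_def using unit_weights
    by (simp add: xcoef_def Let_def sum_distrib_right)
  also have "\<dots> = (\<Sum>\<alpha>\<in>?A1. - (\<Sum>v\<in>V \<union> ?A0. ?t v \<alpha>))"
    by (subst sum.swap) (simp add: sum_negf)
  finally have M: "Mval V A E f q = (\<Sum>\<alpha>\<in>?A1. - (\<Sum>v\<in>V \<union> ?A0. ?t v \<alpha>))" .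
  have weight: "leaf_weight (V \<union> A) E q \<alpha> = - (\<Sum>v\<in>V \<union> ?A0. ?t v \<alpha>) + (\<Sum>\<beta>\<in>?A1 - {\<alpha>}. ?x \<beta> \<alpha>)"
    if "\<alpha> \<in> ?A1" for \<alpha>
  proof -
    have "V \<union> A - {\<alpha>} = (V \<union> ?A0) \<union> (?A1 - {\<alpha>})" "(V \<union> ?A0) \<inter> (?A1 - {\<alpha>}) = {}"
      using that A0 disjoint by auto
    then have "leaf_weight (V \<union> A) E q \<alpha> = - ((\<Sum>v\<in>V \<union> ?A0. ?t v \<alpha>) + (\<Sum>v\<in>?A1 - {\<alpha>}. ?t v \<alpha>))"
      unfolding leaf_weight_def using fin by (simp add: sum.union_disjoint)
    moreover have "(\<Sum>v\<in>?A1 - {\<alpha>}. ?t v \<alpha>) = - (\<Sum>v\<in>?A1 - {\<alpha>}. ?x v \<alpha>)"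
      using arrow_valency by (simp add: sum_negf[symmetric])
    ultimately show ?thesis by simp
  qed
  have "Iform V A E f q ?A1 ?A1 = (\<Sum>(a, b)\<in>{(a, b) \<in> ?A1 \<times> ?A1. a \<noteq> b}. Qstar E q (gp a b))"
    unfolding Iform_def using unit_weights by (intro sum.cong) auto
  also have "\<dots> = (\<Sum>\<alpha>\<in>?A1. \<Sum>\<beta>\<in>?A1 - {\<alpha>}. Qstar E q (gp \<beta> \<alpha>))"
    by (rule sum_off_diagonal[OF fin(1)])
  also have "\<dots> = (\<Sum>\<alpha>\<in>?A1. \<Sum>\<beta>\<in>?A1 - {\<alpha>}. ?x \<beta> \<alpha>)"
    using prod_incident_edges_leaves arrow_valency by (intro sum.cong refl) auto
  finally show ?thesis unfolding M using weight by (simp add: sum.distrib sum_subtractf sum_negf)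
qed

section \<open>The leaf weight along the spine\<close>

definition kappa :: "('b \<Rightarrow> 'c::comm_ring_1) \<Rightarrow> 'b set \<Rightarrow> 'c" where
  "kappa g K = (\<Sum>c\<in>K. prod g (K - {c})) - (of_nat (card K) - 1) * prod g K"

lemma kappa_insert:
  assumes "finite K" "d \<notin> K"
  shows "kappa g (insert d K) = prod g K + g d * (kappa g K - prod g K)"
proof -
  have "prod g (insert d K - {c}) = g d * prod g (K - {c})" if "c \<in> K" for c
  proof -
    have "insert d K - {c} = insert d (K - {c})" using that assms(2) by auto
    then show ?thesis using assms by simp
  qed
  then have "(\<Sum>c\<in>insert d K. prod g (insert d K - {c})) = prod g K + g d * (\<Sum>c\<in>K. prod g (K - {c}))"
    using assms by (simp add: sum_distrib_left)
  then show ?thesis using assms unfolding kappa_def by (simp add: algebra_simps)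
qed

lemma kappa_eq_1:
  assumes "finite K" "\<forall>c\<in>K. \<forall>c'\<in>K. g c \<noteq> 1 \<longrightarrow> g c' \<noteq> 1 \<longrightarrow> c = c'"
  shows "kappa g K = 1"
proof (cases "\<exists>d\<in>K. g d \<noteq> 1")
  case False
  then have "prod g (K - {c}) = 1" "prod g K = 1" for c by (auto intro: prod.neutral)
  then show ?thesis by (simp add: kappa_def)
next
  case True
  then obtain d where d: "d \<in> K" "g d \<noteq> 1" by blast
  let ?K0 = "K - {d}"
  have ones: "g c = 1" if "c \<in> ?K0" for c using that assms(2) d by blast
  then have "prod g (?K0 - {c}) = 1" "prod g ?K0 = 1" for c by (auto intro: prod.neutral)
  then have "kappa g ?K0 = 1" using assms(1) by (simp add: kappa_def)
  moreover have "K = insert d ?K0" using d by blast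
  ultimately show ?thesis
    using kappa_insert[of ?K0 d g] assms(1) \<open>prod g ?K0 = 1\<close> by simp
qed

lemma kappa_remove_eq:
  assumes "finite K" "d \<in> K"
    and "\<forall>c\<in>K - {d}. \<forall>c'\<in>K - {d}. g c \<noteq> 1 \<longrightarrow> g c' \<noteq> 1 \<longrightarrow> c = c'"
  shows "kappa g K = prod g (K - {d}) + g d * (1 - prod g (K - {d}))"
  using kappa_insert[of "K - {d}" d g] kappa_eq_1[of "K - {d}" g] assms insert_Diff[OF assms(2)]
  by simp

locale leaf_rooted_tree = tree +
  fixes \<alpha> :: 'a
  assumes leaf_cell: "\<alpha> \<in> C" and leaf_valency: "valency E \<alpha> = 1"
begin

definition parent :: "'a \<Rightarrow> 'a" where "parent u = gp u \<alpha> ! 1"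

definition children :: "'a \<Rightarrow> 'a set" where "children u = {c \<in> C. c \<noteq> \<alpha> \<and> parent c = u}"

lemma gpath_parent:
  assumes "u \<in> C" "u \<noteq> \<alpha>"
  shows "gp u \<alpha> = u # gp (parent u) \<alpha>" and "parent u \<in> C" and "{u, parent u} \<in> E"
    and "u \<notin> set (gp (parent u) \<alpha>)"
proof -
  obtain r where r0: "gp u \<alpha> = u # r"
    using hd_gpath[OF assms(1) leaf_cell] gpath_not_Nil[OF assms(1) leaf_cell] by (metis list.collapse)
  moreover have "r \<noteq> []" using r0 last_gpath[OF assms(1) leaf_cell] assms(2) by auto
  ultimately obtain w r' where r: "gp u \<alpha> = u # w # r'" by (cases r) auto
  then have w: "parent u = w" unfolding parent_def by simp
  show "gp u \<alpha> = u # gp (parent u) \<alpha>"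
    using gpath_split(2)[OF assms(1) leaf_cell, of "[u]" w r'] r w by simp
  moreover have "{u, w} \<in> E" using is_path_gpath[OF assms(1) leaf_cell] r by (simp add: is_path_Cons_Cons)
  ultimately show "{u, parent u} \<in> E" "parent u \<in> C" "u \<notin> set (gp (parent u) \<alpha>)"
    using distinct_gpath[OF assms(1) leaf_cell] w edge_cells by auto
qed

lemma parent_neq: "u \<in> C \<Longrightarrow> u \<noteq> \<alpha> \<Longrightarrow> parent u \<noteq> u"
  using gpath_parent(3)[of u] edge_neq[of u "parent u"] by auto

lemma child_cell: "c \<in> children u \<Longrightarrow> c \<in> C \<and> c \<noteq> \<alpha> \<and> parent c = u"
  by (simp add: children_def)

lemma gpath_child: "c \<in> children u \<Longrightarrow> gp c \<alpha> = c # gp u \<alpha>"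
  using gpath_parent(1)[of c] by (simp add: children_def)

lemma child_edge: "c \<in> children u \<Longrightarrow> {u, c} \<in> E"
  using gpath_parent(3)[of c] by (auto simp: children_def insert_commute)

lemma child_neq: "c \<in> children u \<Longrightarrow> c \<noteq> u"
  using parent_neq[of c] by (auto simp: children_def)

lemma child_neq_parent:
  assumes "u \<in> C" "u \<noteq> \<alpha>" "c \<in> children u"
  shows "c \<noteq> parent u"
proof
  assume "c = parent u"
  moreover have "u \<in> set (gp c \<alpha>)"
    using gpath_child[OF assms(3)] start_in_gpath[OF assms(1) leaf_cell] by simp
  ultimately show False using gpath_parent(4)[OF assms(1,2)] by simp
qed

lemma finite_children: "finite (children u)"
  using finite_cells by (simp add: children_def)

lemma inj_on_child_edge: "inj_on (\<lambda>c. {u, c}) (children u)"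
proof (rule inj_onI)
  fix c c' assume "c \<in> children u" "c' \<in> children u" "{u, c} = {u, c'}"
  then show "c = c'" using child_neq[of c u] by (auto simp: doubleton_eq_iff)
qed

lemma parent_edge_not_child_edge:
  assumes "u \<in> C" "u \<noteq> \<alpha>"
  shows "{u, parent u} \<notin> (\<lambda>c. {u, c}) ` children u"
proof
  assume "{u, parent u} \<in> (\<lambda>c. {u, c}) ` children u"
  then obtain c where "c \<in> children u" "{u, parent u} = {u, c}" by blast
  then show False
    using child_neq_parent[OF assms] parent_neq[OF assms] by (auto simp: doubleton_eq_iff)
qed

lemma neighbour_child:
  assumes u: "u \<in> C" "u \<noteq> \<alpha>" and w: "{u, w} \<in> E" "w \<noteq> parent u"
  shows "w \<in> children u"
proof -
  have wC: "w \<in> C" and wu: "w \<noteq> u" using edge_cells[OF w(1)] edge_neq[OF w(1)] by auto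
  have path_u: "gp u \<alpha> = u # gp (parent u) \<alpha>" "gp (parent u) \<alpha> \<noteq> []" "hd (gp (parent u) \<alpha>) = parent u"
    using gpath_parent[OF u] gpath_not_Nil leaf_cell by auto
  have "w \<notin> set (gp u \<alpha>)"
  proof
    assume "w \<in> set (gp u \<alpha>)"
    then have "{u, w} \<in> set (path_edges (gp u \<alpha>))"
      using edge_in_path_edges[OF is_path_gpath[OF u(1) leaf_cell] w(1)] start_in_gpath[OF u(1) leaf_cell]
      by blast
    moreover have "{u, w} \<noteq> {u, parent u}" using w(2) wu by (auto simp: doubleton_eq_iff)
    ultimately have "{u, w} \<in> set (path_edges (gp (parent u) \<alpha>))"
      using path_u by (simp add: path_edges_Cons)
    then show False using path_edge_subset_set gpath_parent(4)[OF u] by blast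
  qed
  then have "{w, u} \<notin> set (path_edges (gp u \<alpha>))" using path_edge_subset_set by blast
  moreover have "is_path C E (gp u \<alpha>)" "gp u \<alpha> \<noteq> []" "hd (gp u \<alpha>) = u"
    using is_path_gpath gpath_not_Nil u(1) leaf_cell by auto
  moreover have "{w, u} \<in> E" using w(1) by (simp add: insert_commute)
  ultimately have "is_path C E (w # gp u \<alpha>)" using wC by (simp add: is_path_Cons)
  then have "gp w \<alpha> = w # gp u \<alpha>"
    by (rule gpath_unique) (simp_all add: \<open>gp u \<alpha> \<noteq> []\<close> u(1) leaf_cell)
  then have "parent w = (w # gp u \<alpha>) ! 1" unfolding parent_def by simp
  then have "parent w = u" using path_u(1) by simp
  moreover have "w \<noteq> \<alpha>" using \<open>w \<notin> set (gp u \<alpha>)\<close> end_in_gpath[OF u(1) leaf_cell] by blast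
  ultimately show ?thesis using wC by (simp add: children_def)
qed

lemma edges_at_cell:
  assumes "u \<in> C" "u \<noteq> \<alpha>"
  shows "{e \<in> E. u \<in> e} = insert {u, parent u} ((\<lambda>c. {u, c}) ` children u)"
proof
  show "insert {u, parent u} ((\<lambda>c. {u, c}) ` children u) \<subseteq> {e \<in> E. u \<in> e}"
    using gpath_parent(3)[OF assms] child_edge by auto
next
  show "{e \<in> E. u \<in> e} \<subseteq> insert {u, parent u} ((\<lambda>c. {u, c}) ` children u)"
  proof
    fix e assume e: "e \<in> {e \<in> E. u \<in> e}"
    then obtain a b where ab: "e = {a, b}" using edge_doubleton by blast
    define w where "w = (if u = a then b else a)"
    have "e = {u, w}" using e ab unfolding w_def by auto
    then show "e \<in> insert {u, parent u} ((\<lambda>c. {u, c}) ` children u)"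
      using neighbour_child[OF assms, of w] e by auto
  qed
qed

lemma valency_children: "u \<in> C \<Longrightarrow> u \<noteq> \<alpha> \<Longrightarrow> valency E u = Suc (card (children u))"
  unfolding valency_def edges_at_cell
  using parent_edge_not_child_edge finite_children inj_on_child_edge by (simp add: card_image)

lemma child_not_in_gpath: "c \<in> children u \<Longrightarrow> c \<notin> set (gp u \<alpha>)"
  using gpath_parent(4)[of c] by (auto simp: children_def)

lemma path_edges_gpath_parent:
  assumes "u \<in> C" "u \<noteq> \<alpha>"
  shows "path_edges (gp u \<alpha>) = {u, parent u} # path_edges (gp (parent u) \<alpha>)"
  using gpath_parent[OF assms] gpath_not_Nil[OF _ leaf_cell] leaf_cell
  by (simp add: path_edges_Cons)

lemma prod_edges_at_cell:
  assumes "u \<in> C" "u \<noteq> \<alpha>" "{u, parent u} \<in> F"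
    and "\<And>c. c \<in> children u \<Longrightarrow> {u, c} \<in> F \<longleftrightarrow> c \<in> K"
  shows "(\<Prod>e\<in>{e \<in> E. u \<in> e \<and> e \<notin> F}. q e u) = (\<Prod>c\<in>children u - K. q {u, c} u)"
proof -
  have "{e \<in> E. u \<in> e \<and> e \<notin> F} = {e \<in> {e \<in> E. u \<in> e}. e \<notin> F}" by blast
  also have "\<dots> = (\<lambda>c. {u, c}) ` (children u - K)"
    unfolding edges_at_cell[OF assms(1,2)] using assms(3,4) by auto
  finally show ?thesis
    using prod.reindex[OF inj_on_subset[OF inj_on_child_edge, of "children u - K" u]] by simp
qed

lemma Qcell_gpath_self:
  assumes "u \<in> C" "u \<noteq> \<alpha>"
  shows "Qcell E q (gp u \<alpha>) u = (\<Prod>c\<in>children u. q {u, c} u)"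
proof -
  have "{u, c} \<notin> set (path_edges (gp u \<alpha>))" if "c \<in> children u" for c
    using child_not_in_gpath[OF that] path_edge_subset_set by blast
  then show ?thesis
    unfolding Qcell_def using prod_edges_at_cell[OF assms, of "set (path_edges (gp u \<alpha>))" "{}"]
    by (simp add: path_edges_gpath_parent[OF assms])
qed

lemma Qcell_gpath_child:
  assumes "u \<in> C" "u \<noteq> \<alpha>" "c \<in> children u"
  shows "Qcell E q (gp c \<alpha>) u = (\<Prod>c'\<in>children u - {c}. q {u, c'} u)"
proof -
  have pe: "path_edges (gp c \<alpha>) = {c, u} # path_edges (gp u \<alpha>)"
    using path_edges_gpath_parent[of c] child_cell[OF assms(3)] by simp
  have "{u, c'} \<in> set (path_edges (gp c \<alpha>)) \<longleftrightarrow> c' \<in> {c}" if "c' \<in> children u" for c'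
    using child_not_in_gpath[OF that] path_edge_subset_set child_neq[OF that]
    unfolding pe by (auto simp: doubleton_eq_iff)
  moreover have "{u, parent u} \<in> set (path_edges (gp c \<alpha>))"
    unfolding pe path_edges_gpath_parent[OF assms(1,2)] by simp
  ultimately show ?thesis
    unfolding Qcell_def by (intro prod_edges_at_cell[OF assms(1,2)])
qed

lemma Qcell_gpath_child_above:
  assumes "c \<in> children u" "z \<in> set (gp u \<alpha>)" "z \<noteq> u"
  shows "Qcell E q (gp c \<alpha>) z = Qcell E q (gp u \<alpha>) z"
proof -
  have "path_edges (gp c \<alpha>) = {c, u} # path_edges (gp u \<alpha>)"
    using path_edges_gpath_parent[of c] child_cell[OF assms(1)] by simp
  moreover have "z \<noteq> c" using child_not_in_gpath[OF assms(1)] assms(2) by blast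
  ultimately have "{\<epsilon> \<in> E. z \<in> \<epsilon> \<and> \<epsilon> \<notin> set (path_edges (gp c \<alpha>))}
      = {\<epsilon> \<in> E. z \<in> \<epsilon> \<and> \<epsilon> \<notin> set (path_edges (gp u \<alpha>))}"
    using assms(3) by auto
  then show ?thesis unfolding Qcell_def by simp
qed

definition Q_above :: "('a set \<Rightarrow> 'a \<Rightarrow> int) \<Rightarrow> 'a \<Rightarrow> int" where
  "Q_above q u = (\<Prod>z\<in>set (gp u \<alpha>) - {u}. Qcell E q (gp u \<alpha>) z)"

lemma prod_Qcell_gpath:
  assumes "u \<in> C" "u \<noteq> \<alpha>"
  shows "(\<Prod>z\<in>set (gp u \<alpha>). Qcell E q (gp u \<alpha>) z) = (\<Prod>c\<in>children u. q {u, c} u) * Q_above q u"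
  using prod.remove[OF _ start_in_gpath[OF assms(1) leaf_cell], of "Qcell E q (gp u \<alpha>)"]
    Qcell_gpath_self[OF assms] by (simp add: Q_above_def)

lemma Q_above_child:
  assumes "u \<in> C" "u \<noteq> \<alpha>" "c \<in> children u"
  shows "Q_above q c = (\<Prod>c'\<in>children u - {c}. q {u, c'} u) * Q_above q u"
proof -
  have "set (gp c \<alpha>) - {c} = set (gp u \<alpha>)"
    using gpath_child[OF assms(3)] child_not_in_gpath[OF assms(3)] by auto
  then have "Q_above q c = (\<Prod>z\<in>set (gp u \<alpha>). Qcell E q (gp c \<alpha>) z)"
    by (simp add: Q_above_def)
  also have "\<dots> = Qcell E q (gp c \<alpha>) u * (\<Prod>z\<in>set (gp u \<alpha>) - {u}. Qcell E q (gp c \<alpha>) z)"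
    using prod.remove[OF _ start_in_gpath[OF assms(1) leaf_cell]] by simp
  also have "(\<Prod>z\<in>set (gp u \<alpha>) - {u}. Qcell E q (gp c \<alpha>) z) = Q_above q u"
    unfolding Q_above_def using Qcell_gpath_child_above[OF assms(3)] by (intro prod.cong) auto
  finally show ?thesis using Qcell_gpath_child[OF assms] by simp
qed

lemma edges_at_leaf: obtains w where "{e \<in> E. \<alpha> \<in> e} = {{w, \<alpha>}}" and "{w, \<alpha>} \<in> E"
proof -
  have "card {e \<in> E. \<alpha> \<in> e} = 1" using leaf_valency by (simp add: valency_def)
  then obtain e0 where e0: "{e \<in> E. \<alpha> \<in> e} = {e0}" by (meson card_1_singletonE)
  then have "e0 \<in> E" "\<alpha> \<in> e0" by auto
  then obtain a b where ab: "e0 = {a, b}" using edge_doubleton by blast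
  define w where "w = (if a = \<alpha> then b else a)"
  have "e0 = {w, \<alpha>}" using ab \<open>\<alpha> \<in> e0\<close> unfolding w_def by auto
  then show ?thesis using that e0 by blast
qed

lemma leaf_neighbour:
  obtains w where "{c \<in> C - {\<alpha>}. parent c = \<alpha>} = {w}" and "{w, \<alpha>} \<in> E"
proof -
  obtain w where w: "{e \<in> E. \<alpha> \<in> e} = {{w, \<alpha>}}" "{w, \<alpha>} \<in> E" by (rule edges_at_leaf)
  have "parent c = \<alpha> \<longleftrightarrow> c = w" if c: "c \<in> C" "c \<noteq> \<alpha>" for c
  proof
    assume "parent c = \<alpha>"
    then have "{c, \<alpha>} \<in> {e \<in> E. \<alpha> \<in> e}" using gpath_parent(3)[OF c] by simp
    then show "c = w" using w(1) c(2) by (auto simp: doubleton_eq_iff)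
  next
    assume "c = w"
    then show "parent c = \<alpha>" using gpath_edge[OF w(2)] by (simp add: parent_def)
  qed
  moreover have "w \<in> C" "w \<noteq> \<alpha>" using edge_cells[OF w(2)] edge_neq[OF w(2)] by auto
  ultimately have "{c \<in> C - {\<alpha>}. parent c = \<alpha>} = {w}" by blast
  then show ?thesis using w(2) by (rule that)
qed

lemma Q_above_leaf_neighbour:
  assumes "{w, \<alpha>} \<in> E"
  shows "Q_above q w = 1"
proof -
  obtain w' where w': "{e \<in> E. \<alpha> \<in> e} = {{w', \<alpha>}}" by (rule edges_at_leaf)
  have "{w, \<alpha>} \<in> {e \<in> E. \<alpha> \<in> e}" using assms by simp
  then have "{w, \<alpha>} = {w', \<alpha>}" using w' by simp
  then have "{\<epsilon> \<in> E. \<alpha> \<in> \<epsilon> \<and> \<epsilon> \<notin> set (path_edges [w, \<alpha>])} = {}" using w' by auto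
  then have "Qcell E q [w, \<alpha>] \<alpha> = 1" unfolding Qcell_def by (metis prod.empty)
  moreover have "set [w, \<alpha>] - {w} = {\<alpha>}" using edge_neq[OF assms] by auto
  ultimately show ?thesis by (simp add: Q_above_def gpath_edge[OF assms])
qed

lemma leaf_weight_children:
  "leaf_weight C E q \<alpha> = - (\<Sum>u\<in>C - {\<alpha>}.
     (\<Prod>c\<in>children u. q {u, c} u) * Q_above q u * (int (card (children u)) - 1))"
  unfolding leaf_weight_def
proof (intro arg_cong[where f = uminus] sum.cong refl)
  fix u assume u: "u \<in> C - {\<alpha>}"
  then have "u \<in> C" "u \<noteq> \<alpha>" by auto
  then show "(\<Prod>\<epsilon>\<in>incident_edges E (gp u \<alpha>). q_path q \<epsilon> (gp u \<alpha>)) * (int (valency E u) - 2)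
      = (\<Prod>c\<in>children u. q {u, c} u) * Q_above q u * (int (card (children u)) - 1)"
    using prod_incident_edges[OF is_path_gpath[OF _ leaf_cell]] prod_Qcell_gpath valency_children
    by simp
qed

lemma Q_above_kappa:
  assumes "u \<in> C" "u \<noteq> \<alpha>"
  shows "Q_above q u * kappa (\<lambda>c. q {u, c} u) (children u)
    = (\<Sum>c\<in>children u. Q_above q c)
      - (\<Prod>c\<in>children u. q {u, c} u) * Q_above q u * (int (card (children u)) - 1)"
proof -
  have "(\<Sum>c\<in>children u. Q_above q u * (\<Prod>c'\<in>children u - {c}. q {u, c'} u))
      = (\<Sum>c\<in>children u. Q_above q c)"
    using Q_above_child[OF assms] by (intro sum.cong) (auto simp: mult.commute)
  then show ?thesis unfolding kappa_def by (simp add: algebra_simps sum_distrib_left)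
qed

lemma sum_children:
  fixes h :: "'a \<Rightarrow> 'b::ab_group_add"
  assumes "{c \<in> C - {\<alpha>}. parent c = \<alpha>} = {w}"
  shows "(\<Sum>u\<in>C - {\<alpha>}. \<Sum>c\<in>children u. h c) = (\<Sum>c\<in>C - {\<alpha>}. h c) - h w"
proof -
  have "(\<Union>u\<in>C - {\<alpha>}. children u) = C - {\<alpha>} - {w}"
  proof
    show "(\<Union>u\<in>C - {\<alpha>}. children u) \<subseteq> C - {\<alpha>} - {w}"
      using assms by (auto simp: children_def)
    show "C - {\<alpha>} - {w} \<subseteq> (\<Union>u\<in>C - {\<alpha>}. children u)"
    proof
      fix c assume c: "c \<in> C - {\<alpha>} - {w}"
      then have "parent c \<in> C - {\<alpha>}" using gpath_parent(2)[of c] assms by auto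
      moreover have "c \<in> children (parent c)" using c by (simp add: children_def)
      ultimately show "c \<in> (\<Union>u\<in>C - {\<alpha>}. children u)" by blast
    qed
  qed
  moreover have "(\<Sum>c\<in>(\<Union>u\<in>C - {\<alpha>}. children u). h c) = (\<Sum>u\<in>C - {\<alpha>}. \<Sum>c\<in>children u. h c)"
    using finite_cells finite_children by (intro sum.UNION_disjoint) (auto simp: children_def)
  moreover have "w \<in> C - {\<alpha>}" using assms by blast
  then have "sum h (C - {\<alpha>}) = h w + sum h (C - {\<alpha>} - {w})"
    using sum.remove[of "C - {\<alpha>}" w h] finite_cells by blast
  ultimately show ?thesis by (metis add_diff_cancel_left')
qed

lemma leaf_weight_kappa:
  "leaf_weight C E q \<alpha> = 1 + (\<Sum>u\<in>C - {\<alpha>}. Q_above q u * (kappa (\<lambda>c. q {u, c} u) (children u) - 1))"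
proof -
  obtain w where w: "{c \<in> C - {\<alpha>}. parent c = \<alpha>} = {w}" "{w, \<alpha>} \<in> E" by (rule leaf_neighbour)
  have "(\<Sum>u\<in>C - {\<alpha>}. Q_above q u * kappa (\<lambda>c. q {u, c} u) (children u))
      = (\<Sum>u\<in>C - {\<alpha>}. \<Sum>c\<in>children u. Q_above q c) + leaf_weight C E q \<alpha>"
    unfolding leaf_weight_children using Q_above_kappa by (simp add: sum_subtractf)
  also have "\<dots> = (\<Sum>u\<in>C - {\<alpha>}. Q_above q u) - 1 + leaf_weight C E q \<alpha>"
    using sum_children[OF w(1), of "Q_above q"] Q_above_leaf_neighbour[OF w(2), of q] by simp
  finally show ?thesis by (simp add: algebra_simps sum_subtractf)
qed

context
  fixes V A :: "'a set" and q :: "'a set \<Rightarrow> 'a \<Rightarrow> int" and v0 :: 'a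
  assumes cells_split: "C = V \<union> A" and disjoint: "V \<inter> A = {}" and leaf_arrow: "\<alpha> \<in> A"
    and arrow_valency: "\<forall>a\<in>A. valency E a = 1" and pseudo_root: "pseudo_root V A E q v0"
begin

lemma root_cell: "v0 \<in> C" "v0 \<noteq> \<alpha>"
  using pseudo_root leaf_arrow disjoint cells_split by (auto simp: pseudo_root_def)

lemma children_arrow: "u \<in> A \<Longrightarrow> u \<noteq> \<alpha> \<Longrightarrow> children u = {}"
  using valency_children[of u] arrow_valency cells_split finite_children by auto

lemma child_edges_nontrivial_unique:
  assumes u: "u \<in> V - {v0}" and K: "K \<subseteq> children u"
    and off_path: "\<forall>c\<in>K. {u, c} \<notin> set (path_edges (gp v0 u))"
  shows "\<forall>c\<in>K. \<forall>c'\<in>K. q {u, c} u \<noteq> 1 \<longrightarrow> q {u, c'} u \<noteq> 1 \<longrightarrow> c = c'"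
proof (intro ballI impI)
  fix c c' assume c: "c \<in> K" "c' \<in> K" "q {u, c} u \<noteq> 1" "q {u, c'} u \<noteq> 1"
  let ?S = "{e \<in> E. u \<in> e \<and> e \<notin> set (path_edges (gp v0 u)) \<and> q e u \<noteq> 1}"
  have "card ?S \<le> 1" using pseudo_root u cells_split by (auto simp: pseudo_root_def)
  moreover have "{u, c} \<in> ?S" "{u, c'} \<in> ?S" using c K off_path child_edge by auto
  ultimately have "{u, c} = {u, c'}" using finite_edges card_le_Suc0_iff_eq[of ?S] by auto
  then show "c = c'" using inj_on_child_edge[of u] c(1,2) K unfolding inj_on_def by blast
qed

lemma kappa_off_spine:
  assumes u: "u \<in> C - {\<alpha>}" "u \<notin> set (gp v0 \<alpha>) - {v0, \<alpha>}"
  shows "kappa (\<lambda>c. q {u, c} u) (children u) = 1"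
proof (rule kappa_eq_1[OF finite_children])
  consider "u = v0" | "u \<in> A" | "u \<in> V - {v0}" "u \<notin> set (gp v0 \<alpha>)"
    using u cells_split by auto
  then show "\<forall>c\<in>children u. \<forall>c'\<in>children u. q {u, c} u \<noteq> 1 \<longrightarrow> q {u, c'} u \<noteq> 1 \<longrightarrow> c = c'"
  proof cases
    case 1
    then show ?thesis using pseudo_root child_edge by (auto simp: pseudo_root_def)
  next
    case 2
    then show ?thesis using children_arrow u by simp
  next
    case 3
    have uC: "u \<in> C" "u \<noteq> \<alpha>" using u by auto
    obtain r w s where "gp v0 u = r @ [w, u]" "gp u \<alpha> = u # w # s"
      using gpath_turn_back[OF root_cell(1) uC(1) leaf_cell] 3 uC by force
    moreover have "distinct (gp v0 u)" using distinct_gpath[OF root_cell(1) uC(1)] .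
    ultimately have "e = {w, u}" if "e \<in> set (path_edges (gp v0 u))" "u \<in> e" for e
      using path_edge_at_cell[of "gp v0 u" "r @ [w]" u "[]" e] that by simp
    moreover have "w = parent u" using \<open>gp u \<alpha> = u # w # s\<close> by (simp add: parent_def)
    ultimately have "\<forall>c\<in>children u. {u, c} \<notin> set (path_edges (gp v0 u))"
      using child_neq child_neq_parent[OF uC] by (fastforce simp: doubleton_eq_iff)
    then show ?thesis using child_edges_nontrivial_unique[OF 3(1) order_refl] by blast
  qed
qed

lemma spine_cell_split:
  assumes "u \<in> set (gp v0 \<alpha>) - {v0, \<alpha>}"
  obtains P d R where "gp v0 \<alpha> = P @ d # u # R" and "gp v0 u = P @ [d, u]"
    and "d \<in> children u" and "R \<noteq> []" and "hd R = parent u"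
proof -
  have u: "u \<in> C" "u \<noteq> \<alpha>" "u \<noteq> v0" using assms set_gpath[OF root_cell(1) leaf_cell] by auto
  obtain P0 R where PR: "gp v0 \<alpha> = P0 @ u # R" using assms by (meson DiffD1 split_list)
  have v0u: "gp v0 u = P0 @ [u]" and ua: "gp u \<alpha> = u # R"
    using gpath_split[OF root_cell(1) leaf_cell PR] by auto
  have "P0 \<noteq> []" using v0u hd_gpath[OF root_cell(1) u(1)] u(3) by auto
  then obtain P d where P0: "P0 = P @ [d]" by (metis append_butlast_last_id)
  have "R \<noteq> []" using ua last_gpath[OF u(1) leaf_cell] u(2) by auto
  then have "hd R = parent u" using ua by (cases R) (auto simp: parent_def)
  have "gp d \<alpha> = d # u # R" using gpath_split(2)[OF root_cell(1) leaf_cell, of P d "u # R"] PR P0 by simp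
  moreover have "d \<in> C" using PR P0 set_gpath[OF root_cell(1) leaf_cell] by auto
  moreover have "d \<noteq> \<alpha>" using gpath_refl[OF leaf_cell] \<open>gp d \<alpha> = d # u # R\<close> by auto
  ultimately have "d \<in> children u" by (simp add: children_def parent_def)
  then show ?thesis using that PR P0 v0u \<open>R \<noteq> []\<close> \<open>hd R = parent u\<close> by simp
qed

lemma kappa_on_spine:
  assumes "u \<in> set (gp v0 \<alpha>) - {v0, \<alpha>}"
  shows "kappa (\<lambda>c. q {u, c} u) (children u) - 1 =
    ((\<Prod>e\<in>{e \<in> E. u \<in> e \<and> e \<notin> set (path_edges (gp v0 \<alpha>))}. q e u) - 1)
    * (1 - (\<Prod>e\<in>{e \<in> E. u \<in> e \<and> e \<in> set (path_edges (gp v0 u))}. q e u))"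
proof -
  obtain P d R where PR: "gp v0 \<alpha> = P @ d # u # R" and v0u: "gp v0 u = P @ [d, u]"
    and d: "d \<in> children u" and R: "R \<noteq> []" "hd R = parent u"
    using assms by (rule spine_cell_split)
  have u: "u \<in> C" "u \<noteq> \<alpha>" "u \<noteq> v0" using assms set_gpath[OF root_cell(1) leaf_cell] by auto
  have "u \<in> V" using children_arrow[of u] d u cells_split by auto
  have dist: "distinct (P @ d # u # R)" using distinct_gpath[OF root_cell(1) leaf_cell] PR by simp
  have edges_v0u: "e \<in> set (path_edges (gp v0 u)) \<and> u \<in> e \<longleftrightarrow> e = {u, d}" for e
    using path_edge_at_cell[of "gp v0 u" "P @ [d]" u "[]" e] distinct_gpath[OF root_cell(1) u(1)] v0u
    by (auto simp: path_edges_append[of P d "[u]"] insert_commute)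
  have edges_spine: "{u, c} \<in> set (path_edges (gp v0 \<alpha>)) \<longleftrightarrow> c \<in> {d}" if "c \<in> children u" for c
  proof
    assume a: "{u, c} \<in> set (path_edges (gp v0 \<alpha>))"
    have "P @ d # u # R = (P @ [d]) @ u # R" by simp
    moreover have "{u, c} \<in> set (path_edges (P @ d # u # R))" using a PR by simp
    ultimately have "{u, c} = {last (P @ [d]), u} \<or> {u, c} = {u, hd R}"
      using path_edge_at_cell[OF dist] by blast
    then show "c \<in> {d}"
      using R child_neq[OF that] child_neq_parent[OF u(1,2) that] by (auto simp: doubleton_eq_iff)
  next
    assume "c \<in> {d}"
    then show "{u, c} \<in> set (path_edges (gp v0 \<alpha>))"
      unfolding PR using path_edges_append[of P d "u # R"] by (simp add: insert_commute)
  qed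
  have "{u, parent u} \<in> set (path_edges (gp v0 \<alpha>))"
    unfolding PR path_edges_append[of "P @ [d]" u R, simplified] using R by (simp add: path_edges_Cons)
  then have out: "(\<Prod>e\<in>{e \<in> E. u \<in> e \<and> e \<notin> set (path_edges (gp v0 \<alpha>))}. q e u)
      = (\<Prod>c\<in>children u - {d}. q {u, c} u)"
    by (rule prod_edges_at_cell[OF u(1,2)]) (rule edges_spine)
  have "{e \<in> E. u \<in> e \<and> e \<in> set (path_edges (gp v0 u))} = {{u, d}}"
    using edges_v0u child_edge[OF d] by blast
  then have into: "(\<Prod>e\<in>{e \<in> E. u \<in> e \<and> e \<in> set (path_edges (gp v0 u))}. q e u) = q {u, d} u"
    by simp
  have off_path: "\<forall>c\<in>children u - {d}. {u, c} \<notin> set (path_edges (gp v0 u))"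
  proof (intro ballI notI)
    fix c assume c: "c \<in> children u - {d}" "{u, c} \<in> set (path_edges (gp v0 u))"
    then have "{u, c} = {u, d}" using edges_v0u[of "{u, c}"] by simp
    then show False using c(1) child_neq[of c u] by (auto simp: doubleton_eq_iff)
  qed
  have "u \<in> V - {v0}" using \<open>u \<in> V\<close> u(3) by simp
  from child_edges_nontrivial_unique[OF this Diff_subset off_path]
  have "kappa (\<lambda>c. q {u, c} u) (children u)
      = (\<Prod>c\<in>children u - {d}. q {u, c} u) + q {u, d} u * (1 - (\<Prod>c\<in>children u - {d}. q {u, c} u))"
    by (rule kappa_remove_eq[OF finite_children d])
  then show ?thesis unfolding out into by (simp add: algebra_simps)
qed

lemma leaf_weight_spine:
  "leaf_weight C E q \<alpha> = 1 + (\<Sum>u\<in>set (gp v0 \<alpha>) - {v0, \<alpha>}. Q_above q u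
     * ((\<Prod>e\<in>{e \<in> E. u \<in> e \<and> e \<notin> set (path_edges (gp v0 \<alpha>))}. q e u) - 1)
     * (1 - (\<Prod>e\<in>{e \<in> E. u \<in> e \<and> e \<in> set (path_edges (gp v0 u))}. q e u)))"
proof -
  have "(\<Sum>u\<in>C - {\<alpha>}. Q_above q u * (kappa (\<lambda>c. q {u, c} u) (children u) - 1))
      = (\<Sum>u\<in>set (gp v0 \<alpha>) - {v0, \<alpha>}. Q_above q u * (kappa (\<lambda>c. q {u, c} u) (children u) - 1))"
    using finite_cells set_gpath[OF root_cell(1) leaf_cell] kappa_off_spine
    by (intro sum.mono_neutral_cong_right) auto
  then show ?thesis unfolding leaf_weight_kappa using kappa_on_spine by (simp add: mult.assoc)
qed

end

end

section \<open>The restricted tree T_X\<close>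

locale restricted_tree =
  fixes V A :: "'a set" and E :: "'a set set" and f :: "'a \<Rightarrow> int" and q :: "'a set \<Rightarrow> 'a \<Rightarrow> int"
    and v0 :: 'a and X :: "'a set"
  assumes decorated: "decorated_pseudo_rooted_tree V A E f q v0"
    and X_arrows: "X \<subseteq> A - zero_arrows A f" and X_nonempty: "X \<noteq> {}"
begin

lemma is_tree: "is_tree (V \<union> A) E" and disjoint: "V \<inter> A = {}"
  and arrow_valency: "\<forall>a\<in>A. valency E a = 1" and pseudo_root: "pseudo_root V A E q v0"
  using decorated by (auto simp: decorated_pseudo_rooted_tree_def decorated_tree_def)

sublocale T: tree "V \<union> A" E by unfold_locales (rule is_tree)

abbreviation "kept_edges \<equiv> subE V A E v0 X"
abbreviation "kept_vertices \<equiv> subV V A E v0 X"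
abbreviation "kept \<equiv> kept_vertices \<union> X"
abbreviation "stubs \<equiv> newarr_base V A E q v0 X"

lemma root: "v0 \<in> V" "v0 \<in> V \<union> A" and root_q: "\<forall>e\<in>E. v0 \<in> e \<longrightarrow> q e v0 = 1"
  using pseudo_root by (auto simp: pseudo_root_def)

lemma X_cells: "\<alpha> \<in> X \<Longrightarrow> \<alpha> \<in> A" "\<alpha> \<in> X \<Longrightarrow> \<alpha> \<in> V \<union> A" "\<alpha> \<in> X \<Longrightarrow> \<alpha> \<notin> V"
  using X_arrows disjoint by auto

lemma spine_cells:
  assumes "\<alpha> \<in> X" "z \<in> set (T.gp v0 \<alpha>)"
  shows "z \<in> V \<or> z = \<alpha>"
proof -
  have "z = v0 \<or> z = \<alpha>" if "z \<in> A"
    using valency_1_path_end[OF T.is_path_gpath[OF root(2) X_cells(2)[OF assms(1)]] assms(2)]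
      arrow_valency that root(2) X_cells(2)[OF assms(1)] by simp
  then show ?thesis using T.set_gpath[OF root(2) X_cells(2)[OF assms(1)]] assms(2) root(1) by blast
qed

lemma spine_kept: "\<alpha> \<in> X \<Longrightarrow> set (T.gp v0 \<alpha>) \<subseteq> kept"
  using spine_cells by (auto simp: subV_def)

lemma kept_cells: "kept \<subseteq> V \<union> A"
  using X_arrows by (auto simp: subV_def)

lemma kept_vertices_V: "kept_vertices \<subseteq> V"
  by (auto simp: subV_def)

lemma kept_edges_E: "kept_edges \<subseteq> E"
  by (auto simp: subE_def)

lemma kept_edge_cells: "e \<in> kept_edges \<Longrightarrow> e \<subseteq> kept"
  using spine_kept path_edge_subset_set by (fastforce simp: subE_def)

lemma root_kept: "v0 \<in> kept_vertices"
proof -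
  obtain \<alpha> where "\<alpha> \<in> X" using X_nonempty by blast
  then show ?thesis using T.start_in_gpath[OF root(2) X_cells(2)] root(1) by (auto simp: subV_def)
qed

lemma path_edges_root_kept:
  assumes "x \<in> kept"
  shows "set (path_edges (T.gp v0 x)) \<subseteq> kept_edges"
proof -
  obtain \<alpha> where a: "\<alpha> \<in> X" "x \<in> set (T.gp v0 \<alpha>)"
    using assms T.end_in_gpath[OF root(2) X_cells(2)] by (auto simp: subV_def)
  obtain P R where PR: "T.gp v0 \<alpha> = P @ x # R" using a(2) by (meson split_list)
  have "T.gp v0 x = P @ [x]" using T.gpath_split(1)[OF root(2) X_cells(2)[OF a(1)] PR] .
  then have "set (path_edges (T.gp v0 x)) \<subseteq> set (path_edges (T.gp v0 \<alpha>))"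
    unfolding PR path_edges_append[of P x R] by simp
  then show ?thesis using a(1) T.path_edges_gpath[OF root(2) X_cells(2)[OF a(1)]]
    unfolding subE_def by blast
qed

lemma path_edges_kept:
  assumes "x \<in> kept" "y \<in> kept"
  shows "set (path_edges (T.gp x y)) \<subseteq> kept_edges"
proof -
  have xy: "x \<in> V \<union> A" "y \<in> V \<union> A" using assms kept_cells by auto
  have "set (path_edges (T.gp x v0)) = set (path_edges (T.gp v0 x))"
    using T.gpath_rev[OF root(2) xy(1)] by (simp add: path_edges_rev)
  then show ?thesis
    using T.path_edges_gpath_trans[OF xy(1) root(2) xy(2)] path_edges_root_kept assms by blast
qed

lemma stubs_kept_vertices: "stubs \<subseteq> kept_vertices"
  by (auto simp: newarr_base_def)

lemma finite_stubs: "finite stubs"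
  using kept_cells stubs_kept_vertices T.finite_cells by (auto intro: finite_subset)

lemma kept_tree: "is_tree kept kept_edges"
  and gpath_kept: "x \<in> kept \<Longrightarrow> y \<in> kept \<Longrightarrow> gpath kept kept_edges x y = T.gp x y"
  using T.path_closed_subtree[OF kept_cells kept_edges_E] kept_edge_cells path_edges_kept by blast+

lemma gpath_kept_subset: "x \<in> kept \<Longrightarrow> y \<in> kept \<Longrightarrow> set (T.gp x y) \<subseteq> kept"
  using tree.set_gpath[OF tree.intro[OF kept_tree]] gpath_kept by metis

lemma stubs_tree:
  assumes "finite M" "M \<subseteq> stubs"
  shows "is_tree (Inl ` kept \<union> Inr ` M) (image Inl ` kept_edges \<union> (\<lambda>v. {Inl v, Inr v}) ` M) \<and>
    (\<forall>x\<in>kept. \<forall>y\<in>kept.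
      gpath (Inl ` kept \<union> Inr ` M) (image Inl ` kept_edges \<union> (\<lambda>v. {Inl v, Inr v}) ` M) (Inl x) (Inl y)
      = map Inl (T.gp x y))"
  using assms
proof (induction M rule: finite_induct)
  case empty
  show ?case
    using tree.image_tree[OF tree.intro[OF kept_tree] inj_Inl] gpath_kept by auto
next
  case (insert n M)
  let ?C = "Inl ` kept \<union> Inr ` M" and ?E = "image Inl ` kept_edges \<union> (\<lambda>v. {Inl v, Inr v}) ` M"
  have IH: "is_tree ?C ?E" "\<forall>x\<in>kept. \<forall>y\<in>kept. gpath ?C ?E (Inl x) (Inl y) = map Inl (T.gp x y)"
    using insert.IH insert.prems by simp_all
  interpret tree ?C ?E by unfold_locales (rule IH(1))
  have n: "Inl n \<in> ?C" "Inr n \<notin> ?C" using insert stubs_kept_vertices by auto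
  have "insert (Inr n) ?C = Inl ` kept \<union> Inr ` insert n M"
    "insert {Inl n, Inr n} ?E = image Inl ` kept_edges \<union> (\<lambda>v. {Inl v, Inr v}) ` insert n M"
    by auto
  then show ?case using add_leaf[OF n] IH(2) by auto
qed

abbreviation "TV \<equiv> TX_V V A E v0 X"
abbreviation "TA \<equiv> TX_A V A E q v0 X"
abbreviation "TE \<equiv> TX_E V A E q v0 X"
abbreviation "Tq \<equiv> TX_q V A E q v0 X"
abbreviation "Tf \<equiv> TX_f f"
abbreviation "gX \<equiv> gpath (TV \<union> TA) TE"

lemma TX_cells: "TV \<union> TA = Inl ` kept \<union> Inr ` stubs"
  by (auto simp: TX_V_def TX_A_def)

lemma TX_tree: "is_tree (TV \<union> TA) TE"
  and gpath_TX: "x \<in> kept \<Longrightarrow> y \<in> kept \<Longrightarrow> gX (Inl x) (Inl y) = map Inl (T.gp x y)"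
  unfolding TX_cells TX_E_def using stubs_tree[OF finite_stubs order_refl] by auto

lemma path_edges_gpath_TX:
  "x \<in> kept \<Longrightarrow> y \<in> kept \<Longrightarrow> set (path_edges (gX (Inl x) (Inl y))) = image Inl ` set (path_edges (T.gp x y))"
  by (simp add: gpath_TX path_edges_map)

lemma TX_edges_at_Inl: "{e' \<in> TE. Inl w \<in> e'} = image Inl ` {e \<in> kept_edges. w \<in> e}
    \<union> (if w \<in> stubs then {{Inl w, Inr w}} else {})"
  unfolding TX_E_def by auto

lemma TX_edges_at_Inr: "{e' \<in> TE. Inr n \<in> e'} = (if n \<in> stubs then {{Inl n, Inr n}} else {})"
  unfolding TX_E_def by auto

lemma TX_q_Inl: "Tq (Inl ` e) (Inl w) = q e w"
  unfolding TX_q_def by (simp add: inj_vimage_image_eq image_iff)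

lemma TX_q_stub: "Tq {Inl w, Inr w} (Inl w) = bcoef V A E q v0 X w"
  by (simp add: TX_q_def)

lemma inj_image_Inl: "inj (image Inl :: 'a set \<Rightarrow> ('a + 'a) set)"
  using inj_on_image_Pow[of Inl UNIV] by (simp add: inj_on_def)

lemma edges_at_X:
  assumes "\<alpha> \<in> X"
  shows "{e \<in> kept_edges. \<alpha> \<in> e} = {e \<in> E. \<alpha> \<in> e}"
proof -
  have "v0 \<noteq> \<alpha>" using root(1) X_cells(3)[OF assms] by auto
  then obtain e where e: "e \<in> set (path_edges (T.gp v0 \<alpha>))" "\<alpha> \<in> e"
    using cell_in_path_edge[OF T.length_gpath] T.end_in_gpath root(2) X_cells(2)[OF assms] by meson
  then have "e \<in> kept_edges" using assms T.path_edges_gpath[OF root(2) X_cells(2)[OF assms]]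
    by (auto simp: subE_def)
  moreover have "e' = e" if "e' \<in> E" "\<alpha> \<in> e'" for e'
    using valency_1_edge_unique[of E \<alpha> e' e] arrow_valency X_cells(1)[OF assms] that e
      kept_edges_E calculation by blast
  ultimately show ?thesis using kept_edges_E e(2) by blast
qed

lemma bcoef_kept: "w \<in> kept \<Longrightarrow> w \<notin> stubs \<Longrightarrow> bcoef V A E q v0 X w = 1"
proof (cases "w \<in> kept_vertices")
  case False
  assume "w \<in> kept"
  then have "{e \<in> E. w \<in> e \<and> e \<notin> kept_edges} = {}" using False edges_at_X by blast
  then show ?thesis unfolding bcoef_def by (metis prod.empty)
qed (simp add: newarr_base_def)

lemma prod_image_Inl: "(\<Prod>e'\<in>image Inl ` S. Tq e' (Inl w)) = (\<Prod>e\<in>S. q e w)"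
  using prod.reindex[OF inj_on_subset[OF inj_image_Inl subset_UNIV], of "\<lambda>e'. Tq e' (Inl w)" S]
  by (simp add: TX_q_Inl)

lemma prod_TX_edges_off:
  assumes w: "w \<in> kept" and F: "F \<subseteq> kept_edges"
  shows "(\<Prod>e'\<in>{e' \<in> TE. Inl w \<in> e' \<and> e' \<notin> image Inl ` F}. Tq e' (Inl w))
       = (\<Prod>e\<in>{e \<in> E. w \<in> e \<and> e \<notin> F}. q e w)"
proof -
  let ?B = "{e \<in> kept_edges. w \<in> e \<and> e \<notin> F}"
  let ?S = "if w \<in> stubs then {{Inl w, Inr w}} else {}"
  have fin: "finite kept_edges" using kept_edges_E T.finite_edges finite_subset by blast
  have "{e' \<in> TE. Inl w \<in> e' \<and> e' \<notin> image Inl ` F} = image Inl ` ?B \<union> ?S"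
    unfolding Collect_conj_eq[of "\<lambda>e'. e' \<in> TE \<and> Inl w \<in> e'", simplified] TX_edges_at_Inl
    by (auto simp: inj_image_mem_iff[OF inj_image_Inl] inj_image_eq_iff[OF inj_Inl])
  moreover have "image Inl ` ?B \<inter> ?S = {}" by auto
  moreover have "(\<Prod>e'\<in>?S. Tq e' (Inl w)) = bcoef V A E q v0 X w"
    using TX_q_stub bcoef_kept[OF w] by auto
  ultimately have "(\<Prod>e'\<in>{e' \<in> TE. Inl w \<in> e' \<and> e' \<notin> image Inl ` F}. Tq e' (Inl w))
      = (\<Prod>e\<in>?B. q e w) * (\<Prod>e\<in>{e \<in> E. w \<in> e \<and> e \<notin> kept_edges}. q e w)"
    using fin by (simp add: prod.union_disjoint prod_image_Inl bcoef_def)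
  also have "\<dots> = (\<Prod>e\<in>{e \<in> E. w \<in> e \<and> e \<notin> F}. q e w)"
  proof -
    have "{e \<in> E. w \<in> e \<and> e \<notin> F} = ?B \<union> {e \<in> E. w \<in> e \<and> e \<notin> kept_edges}"
      using F kept_edges_E by auto
    moreover have "?B \<inter> {e \<in> E. w \<in> e \<and> e \<notin> kept_edges} = {}" by blast
    ultimately show ?thesis using fin T.finite_edges by (simp add: prod.union_disjoint)
  qed
  finally show ?thesis .
qed

lemma prod_TX_edges_on:
  assumes "F \<subseteq> kept_edges"
  shows "(\<Prod>e'\<in>{e' \<in> TE. Inl w \<in> e' \<and> e' \<in> image Inl ` F}. Tq e' (Inl w))
       = (\<Prod>e\<in>{e \<in> E. w \<in> e \<and> e \<in> F}. q e w)"
proof -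
  have "{e' \<in> TE. Inl w \<in> e' \<and> e' \<in> image Inl ` F} = image Inl ` {e \<in> E. w \<in> e \<and> e \<in> F}"
    unfolding Collect_conj_eq[of "\<lambda>e'. e' \<in> TE \<and> Inl w \<in> e'", simplified] TX_edges_at_Inl
    using assms kept_edges_E by (auto simp: inj_image_mem_iff[OF inj_image_Inl] inj_image_eq_iff[OF inj_Inl])
  then show ?thesis by (simp add: prod_image_Inl)
qed

lemma Qcell_TX:
  assumes "w \<in> kept" "set (path_edges \<gamma>) \<subseteq> kept_edges"
  shows "Qcell TE Tq (map Inl \<gamma>) (Inl w) = Qcell E q \<gamma> w"
  using prod_TX_edges_off[OF assms] unfolding Qcell_def by (simp add: path_edges_map)

lemma TX_disjoint: "TV \<inter> TA = {}"
  using kept_vertices_V X_arrows disjoint by (auto simp: TX_V_def TX_A_def)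

lemma TX_arrow_valency: "\<forall>a\<in>TA. valency TE a = 1"
proof
  fix a assume "a \<in> TA"
  then consider (old) \<alpha> where "\<alpha> \<in> X" "a = Inl \<alpha>" | (new) n where "n \<in> stubs" "a = Inr n"
    by (auto simp: TX_A_def)
  then show "valency TE a = 1"
  proof cases
    case old
    then have "\<alpha> \<notin> stubs" using stubs_kept_vertices kept_vertices_V X_cells(3) by blast
    then have "{e' \<in> TE. a \<in> e'} = image Inl ` {e \<in> E. \<alpha> \<in> e}"
      using TX_edges_at_Inl[of \<alpha>] edges_at_X[OF old(1)] old(2) by simp
    moreover have "card {e \<in> E. \<alpha> \<in> e} = 1"
      using arrow_valency X_cells(1)[OF old(1)] by (simp add: valency_def)
    ultimately show ?thesis
      using card_image[OF inj_on_subset[OF inj_image_Inl subset_UNIV]] by (simp add: valency_def)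
  next
    case new
    then show ?thesis using TX_edges_at_Inr[of n] by (simp add: valency_def)
  qed
qed

lemma TX_nonzero_arrows: "TA - zero_arrows TA Tf = Inl ` X"
  using X_arrows by (auto simp: TX_A_def zero_arrows_def TX_f_def)

lemma root_not_stub: "v0 \<notin> stubs"
proof -
  have "bcoef V A E q v0 X v0 = 1" unfolding bcoef_def using root_q by (intro prod.neutral) auto
  then show ?thesis by (simp add: newarr_base_def)
qed

lemma stub_nontrivial_edge:
  assumes "u \<in> stubs"
  obtains e0 where "e0 \<in> E" "u \<in> e0" "e0 \<notin> kept_edges" "q e0 u \<noteq> 1"
proof -
  have "bcoef V A E q v0 X u \<noteq> 1" using assms by (simp add: newarr_base_def)
  then show ?thesis using that unfolding bcoef_def by (metis (mono_tags, lifting) mem_Collect_eq prod.neutral)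
qed

lemma nontrivial_edges_TX:
  assumes "u \<in> kept"
  defines "F \<equiv> set (path_edges (T.gp v0 u))"
  shows "{e' \<in> TE. Inl u \<in> e' \<and> e' \<notin> set (path_edges (gX (Inl v0) (Inl u))) \<and> Tq e' (Inl u) \<noteq> 1}
    = image Inl ` {e \<in> kept_edges. u \<in> e \<and> e \<notin> F \<and> q e u \<noteq> 1}
      \<union> (if u \<in> stubs then {{Inl u, Inr u}} else {})"
proof -
  have "set (path_edges (gX (Inl v0) (Inl u))) = image Inl ` F"
    using path_edges_gpath_TX root_kept assms(1) unfolding F_def by blast
  then show ?thesis
    unfolding Collect_conj_eq[of "\<lambda>e'. e' \<in> TE \<and> Inl u \<in> e'", simplified] TX_edges_at_Inl
    using TX_q_Inl TX_q_stub
    by (auto simp: inj_image_mem_iff[OF inj_image_Inl] inj_image_eq_iff[OF inj_Inl] newarr_base_def)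
qed

lemma card_nontrivial_edges_TX:
  assumes "u \<in> kept_vertices" "u \<noteq> v0"
  shows "card {e' \<in> TE. Inl u \<in> e' \<and> e' \<notin> set (path_edges (gX (Inl v0) (Inl u))) \<and> Tq e' (Inl u) \<noteq> 1} \<le> 1"
proof -
  let ?F = "set (path_edges (T.gp v0 u))"
  let ?S = "{e \<in> E. u \<in> e \<and> e \<notin> ?F \<and> q e u \<noteq> 1}"
  let ?K = "{e \<in> kept_edges. u \<in> e \<and> e \<notin> ?F \<and> q e u \<noteq> 1}"
  have S: "card ?S \<le> 1" using pseudo_root assms kept_vertices_V by (auto simp: pseudo_root_def)
  have "u \<in> kept" using assms(1) by simp
  then have eq: "{e' \<in> TE. Inl u \<in> e' \<and> e' \<notin> set (path_edges (gX (Inl v0) (Inl u))) \<and> Tq e' (Inl u) \<noteq> 1}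
    = image Inl ` ?K \<union> (if u \<in> stubs then {{Inl u, Inr u}} else {})"
    by (rule nontrivial_edges_TX)
  have "finite ?S" using T.finite_edges by simp
  show ?thesis
  proof (cases "u \<in> stubs")
    case True
    then obtain e0 where e0: "e0 \<in> E" "u \<in> e0" "e0 \<notin> kept_edges" "q e0 u \<noteq> 1"
      by (rule stub_nontrivial_edge)
    then have "e0 \<in> ?S" using path_edges_root_kept assms(1) by auto
    then have K_empty: "?K = {}"
      using S card_le_Suc0_iff_eq[OF \<open>finite ?S\<close>] kept_edges_E e0(3) by auto
    show ?thesis unfolding eq K_empty using True by simp
  next
    case False
    have "card (image Inl ` ?K :: ('a + 'a) set set) \<le> card ?K"
      using finite_subset[OF _ T.finite_edges] kept_edges_E by (intro card_image_le) auto
    also have "\<dots> \<le> card ?S" using kept_edges_E by (intro card_mono[OF \<open>finite ?S\<close>]) auto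
    finally show ?thesis unfolding eq using False S by simp
  qed
qed

lemma TX_pseudo_root: "pseudo_root TV TA TE Tq (Inl v0)"
  unfolding pseudo_root_def
proof (intro conjI ballI impI)
  show "Inl v0 \<in> TV" using root_kept by (simp add: TX_V_def)
next
  fix e' assume "e' \<in> TE" "Inl v0 \<in> e'"
  then have "e' \<in> {e' \<in> TE. Inl v0 \<in> e'}" by simp
  then have "e' \<in> image Inl ` {e \<in> kept_edges. v0 \<in> e}"
    unfolding TX_edges_at_Inl using root_not_stub by simp
  then obtain e where "e \<in> kept_edges" "v0 \<in> e" "e' = Inl ` e" by blast
  then show "Tq e' (Inl v0) = 1" using TX_q_Inl root_q kept_edges_E by auto
next
  fix v' assume "v' \<in> TV - {Inl v0}"
  then obtain u where "u \<in> kept_vertices" "u \<noteq> v0" "v' = Inl u" by (auto simp: TX_V_def)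
  then show "card {e \<in> TE. v' \<in> e \<and> e \<notin> set (path_edges (gX (Inl v0) v')) \<and> Tq e v' \<noteq> 1} \<le> 1"
    using card_nontrivial_edges_TX by simp
qed

lemma Q_above_TX:
  assumes "\<alpha> \<in> X" "u \<in> kept"
  shows "leaf_rooted_tree.Q_above (TV \<union> TA) TE (Inl \<alpha>) Tq (Inl u) = leaf_rooted_tree.Q_above (V \<union> A) E \<alpha> q u"
proof -
  have \<alpha>: "\<alpha> \<in> kept" "Inl \<alpha> \<in> TA" using assms(1) by (auto simp: TX_A_def)
  interpret AT: leaf_rooted_tree "V \<union> A" E \<alpha>
    by unfold_locales (use X_cells[OF assms(1)] arrow_valency in auto)
  interpret AX: leaf_rooted_tree "TV \<union> TA" TE "Inl \<alpha>"
    using TX_tree by unfold_locales (use \<alpha>(2) TX_arrow_valency in auto)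
  have cells: "set (map Inl (T.gp u \<alpha>)) - {Inl u} = Inl ` (set (T.gp u \<alpha>) - {u})" by auto
  have "AX.Q_above Tq (Inl u)
      = (\<Prod>z\<in>set (T.gp u \<alpha>) - {u}. Qcell TE Tq (map Inl (T.gp u \<alpha>)) (Inl z))"
    unfolding AX.Q_above_def gpath_TX[OF assms(2) \<alpha>(1)] cells by (subst prod.reindex) auto
  also have "\<dots> = (\<Prod>z\<in>set (T.gp u \<alpha>) - {u}. Qcell E q (T.gp u \<alpha>) z)"
    using Qcell_TX path_edges_kept[OF assms(2) \<alpha>(1)] gpath_kept_subset[OF assms(2) \<alpha>(1)]
    by (intro prod.cong) auto
  finally show ?thesis unfolding AT.Q_above_def .
qed

lemma leaf_weight_TX:
  assumes "\<alpha> \<in> X"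
  shows "leaf_weight (TV \<union> TA) TE Tq (Inl \<alpha>) = leaf_weight (V \<union> A) E q \<alpha>"
proof -
  have \<alpha>: "\<alpha> \<in> kept" "Inl \<alpha> \<in> TA" using assms by (auto simp: TX_A_def)
  interpret AT: leaf_rooted_tree "V \<union> A" E \<alpha>
    by unfold_locales (use X_cells[OF assms] arrow_valency in auto)
  interpret AX: leaf_rooted_tree "TV \<union> TA" TE "Inl \<alpha>"
    using TX_tree by unfold_locales (use \<alpha>(2) TX_arrow_valency in auto)
  let ?spine = "set (T.gp v0 \<alpha>) - {v0, \<alpha>}"
  have spine: "set (gX (Inl v0) (Inl \<alpha>)) - {Inl v0, Inl \<alpha>} = Inl ` ?spine"
    using gpath_TX[OF _ \<alpha>(1)] root_kept by auto
  have spine_term: "AX.Q_above Tq (Inl u)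
     * ((\<Prod>e\<in>{e \<in> TE. Inl u \<in> e \<and> e \<notin> set (path_edges (gX (Inl v0) (Inl \<alpha>)))}. Tq e (Inl u)) - 1)
     * (1 - (\<Prod>e\<in>{e \<in> TE. Inl u \<in> e \<and> e \<in> set (path_edges (gX (Inl v0) (Inl u)))}. Tq e (Inl u)))
     = AT.Q_above q u
     * ((\<Prod>e\<in>{e \<in> E. u \<in> e \<and> e \<notin> set (path_edges (T.gp v0 \<alpha>))}. q e u) - 1)
     * (1 - (\<Prod>e\<in>{e \<in> E. u \<in> e \<and> e \<in> set (path_edges (T.gp v0 u))}. q e u))"
    if "u \<in> ?spine" for u
  proof -
    have u: "u \<in> kept" using that spine_kept[OF assms] by auto
    show ?thesis
      using Q_above_TX[OF assms u] root_kept
        prod_TX_edges_off[OF u path_edges_kept[OF _ \<alpha>(1)]] prod_TX_edges_on[OF path_edges_kept[OF _ u]]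
      by (simp add: path_edges_gpath_TX[OF _ \<alpha>(1)] path_edges_gpath_TX[OF _ u])
  qed
  show ?thesis
    unfolding AT.leaf_weight_spine[OF refl disjoint X_cells(1)[OF assms] arrow_valency pseudo_root]
      AX.leaf_weight_spine[OF refl TX_disjoint \<alpha>(2) TX_arrow_valency TX_pseudo_root] spine
    using spine_term by (simp add: sum.reindex)
qed

lemma Qstar_TX:
  assumes "a \<in> kept" "b \<in> kept"
  shows "Qstar TE Tq (gX (Inl a) (Inl b)) = Qstar E q (T.gp a b)"
  unfolding gpath_TX[OF assms] Qstar_def
  using Qcell_TX path_edges_kept[OF assms] gpath_kept_subset[OF assms] nth_mem
  by (intro prod.cong) (auto simp: subset_iff)

lemma Iform_TX: "Iform TV TA TE Tf Tq (Inl ` X) (Inl ` X) = Iform V A E f q X X"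
proof -
  have "{(a', b') \<in> Inl ` X \<times> Inl ` X. a' \<noteq> b'} = map_prod Inl Inl ` {(a, b) \<in> X \<times> X. a \<noteq> b}"
    by auto
  moreover have "inj_on (map_prod Inl Inl) {(a, b) \<in> X \<times> X. a \<noteq> b}"
    by (auto simp: inj_on_def)
  ultimately show ?thesis
    unfolding Iform_def using Qstar_TX by (intro sum.reindex_cong) (auto simp: TX_f_def)
qed

lemma M_sub_eq:
  assumes "\<forall>\<alpha>\<in>A - zero_arrows A f. f \<alpha> = 1"
  shows "M_sub V A E f q v0 X = (\<Sum>\<alpha>\<in>X. leaf_weight (V \<union> A) E q \<alpha>) - Iform V A E f q X X"
proof -
  have "\<forall>a\<in>TA - zero_arrows TA Tf. Tf a = 1"
    unfolding TX_nonzero_arrows using assms X_arrows by (auto simp: TX_f_def)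
  then have "M_sub V A E f q v0 X
      = (\<Sum>a\<in>Inl ` X. leaf_weight (TV \<union> TA) TE Tq a) - Iform TV TA TE Tf Tq (Inl ` X) (Inl ` X)"
    unfolding M_sub_def using Mval_eq_sum_leaf_weight[OF TX_tree TX_disjoint TX_arrow_valency]
    by (simp add: TX_nonzero_arrows)
  then show ?thesis by (simp add: sum.reindex leaf_weight_TX Iform_TX)
qed

end

section \<open>Partitions of the arrows\<close>

lemma Iform_singleton: "Iform V A E f q {\<alpha>} {\<alpha>} = 0"
proof -
  have no_pairs: "{(a, b). a = \<alpha> \<and> b = \<alpha> \<and> a \<noteq> b} = {}" by auto
  show ?thesis unfolding Iform_def by (simp add: no_pairs)
qed

lemma sum_partition_on:
  assumes "partition_on S P" "finite S"
  shows "(\<Sum>X\<in>P. sum g X) = sum g S"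
proof -
  have "finite X" if "X \<in> P" for X
    using that assms partition_onD1[OF assms(1)] by (metis Union_upper finite_subset)
  then show ?thesis
    using sum.Union_disjoint[of P g] partition_onD1[OF assms(1)] partition_onD2[OF assms(1)]
    by (auto simp: disjoint_def)
qed

lemma sum_off_diagonal_partition_on:
  assumes "partition_on S P" "finite S"
  shows "(\<Sum>(X, Y)\<in>P \<times> P. \<Sum>(a, b)\<in>{(a, b) \<in> X \<times> Y. a \<noteq> b}. h a b)
    = (\<Sum>(a, b)\<in>{(a, b) \<in> S \<times> S. a \<noteq> b}. h a b)"
proof -
  let ?D = "\<lambda>(X, Y). {(a, b) \<in> X \<times> Y. a \<noteq> b}"
  have S: "S = \<Union>P" and disj: "disjoint P" using partition_onD1 partition_onD2 assms(1) by auto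
  have "finite X" if "X \<in> P" for X using S assms(2) that by (meson Union_upper finite_subset)
  then have fin: "finite P" "\<forall>XY\<in>P \<times> P. finite (?D XY)"
    using finite_elements[OF assms(2,1)] by (auto intro: finite_subset[of _ "_ \<times> _"])
  have "?D XY \<inter> ?D XY' = {}" if "XY \<in> P \<times> P" "XY' \<in> P \<times> P" "XY \<noteq> XY'" for XY XY'
    using that disj by (auto simp: disjoint_def)
  then have "(\<Sum>(a, b)\<in>(\<Union>XY\<in>P \<times> P. ?D XY). h a b) = (\<Sum>XY\<in>P \<times> P. \<Sum>(a, b)\<in>?D XY. h a b)"
    using fin by (intro sum.UNION_disjoint) auto
  moreover have "(\<Union>XY\<in>P \<times> P. ?D XY) = {(a, b) \<in> S \<times> S. a \<noteq> b}" using S by auto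
  ultimately show ?thesis by (simp add: case_prod_unfold)
qed

lemma Iform_partition_on:
  assumes "partition_on S P" "finite S"
  shows "(\<Sum>(X, Y)\<in>{(X, Y) \<in> P \<times> P. X \<noteq> Y}. Iform V A E f q X Y)
    = Iform V A E f q S S - (\<Sum>X\<in>P. Iform V A E f q X X)"
proof -
  have fin: "finite P" using finite_elements[OF assms(2,1)] .
  have split: "{(X, Y) \<in> P \<times> P. X \<noteq> Y} \<union> (\<lambda>X. (X, X)) ` P = P \<times> P" by auto
  have "(\<Sum>(X, Y)\<in>{(X, Y) \<in> P \<times> P. X \<noteq> Y} \<union> (\<lambda>X. (X, X)) ` P. Iform V A E f q X Y)
      = (\<Sum>(X, Y)\<in>{(X, Y) \<in> P \<times> P. X \<noteq> Y}. Iform V A E f q X Y)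
        + (\<Sum>(X, Y)\<in>(\<lambda>X. (X, X)) ` P. Iform V A E f q X Y)"
    by (rule sum.union_disjoint) (use fin in \<open>auto intro: finite_subset[of _ "P \<times> P"]\<close>)
  then have "(\<Sum>(X, Y)\<in>P \<times> P. Iform V A E f q X Y)
      = (\<Sum>(X, Y)\<in>{(X, Y) \<in> P \<times> P. X \<noteq> Y}. Iform V A E f q X Y)
        + (\<Sum>(X, Y)\<in>(\<lambda>X. (X, X)) ` P. Iform V A E f q X Y)"
    unfolding split .
  also have "(\<Sum>(X, Y)\<in>(\<lambda>X. (X, X)) ` P. Iform V A E f q X Y) = (\<Sum>X\<in>P. Iform V A E f q X X)"
    by (simp add: sum.reindex inj_on_def)
  moreover have "(\<Sum>(X, Y)\<in>P \<times> P. Iform V A E f q X Y) = Iform V A E f q S S"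
    unfolding Iform_def by (rule sum_off_diagonal_partition_on[OF assms])
  ultimately show ?thesis by simp
qed

theorem proposition4p12:
  fixes V A :: "'a set" and E :: "'a set set" and f :: "'a \<Rightarrow> int"
    and q :: "'a set \<Rightarrow> 'a \<Rightarrow> int" and v0 :: 'a and P :: "'a set set"
  assumes "decorated_pseudo_rooted_tree V A E f q v0"
    and "\<forall>\<alpha>\<in>A - zero_arrows A f. f \<alpha> = 1"
    and "partition_on (A - zero_arrows A f) P"
  shows "Mval V A E f q =
           (\<Sum>\<alpha>\<in>A - zero_arrows A f. M_sub V A E f q v0 {\<alpha>})
           - Iform V A E f q (A - zero_arrows A f) (A - zero_arrows A f)
         \<and> Mval V A E f q =
           (\<Sum>X\<in>P. M_sub V A E f q v0 X)
           - (\<Sum>(X, Y)\<in>{(X, Y) \<in> P \<times> P. X \<noteq> Y}. Iform V A E f q X Y)"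
proof -
  let ?A1 = "A - zero_arrows A f" and ?w = "leaf_weight (V \<union> A) E q" and ?I = "Iform V A E f q"
  have tree: "is_tree (V \<union> A) E" "V \<inter> A = {}" "\<forall>a\<in>A. valency E a = 1" and fin: "finite ?A1"
    using assms(1) by (auto simp: decorated_pseudo_rooted_tree_def decorated_tree_def)
  have M: "Mval V A E f q = (\<Sum>\<alpha>\<in>?A1. ?w \<alpha>) - ?I ?A1 ?A1"
    using Mval_eq_sum_leaf_weight[OF tree assms(2)] .
  have M_sub: "M_sub V A E f q v0 X = (\<Sum>\<alpha>\<in>X. ?w \<alpha>) - ?I X X" if "X \<subseteq> ?A1" "X \<noteq> {}" for X
    using restricted_tree.M_sub_eq[OF restricted_tree.intro[OF assms(1) that] assms(2)] .
  have blocks: "X \<subseteq> ?A1" "X \<noteq> {}" if "X \<in> P" for X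
    using that partition_onD1[OF assms(3)] partition_onD3[OF assms(3)] by auto
  have "Mval V A E f q = (\<Sum>\<alpha>\<in>?A1. M_sub V A E f q v0 {\<alpha>}) - ?I ?A1 ?A1"
    unfolding M using M_sub[of "{_}"] by (simp add: Iform_singleton)
  moreover have "Mval V A E f q = (\<Sum>X\<in>P. M_sub V A E f q v0 X)
      - (\<Sum>(X, Y)\<in>{(X, Y) \<in> P \<times> P. X \<noteq> Y}. ?I X Y)"
    unfolding M Iform_partition_on[OF assms(3) fin] sum_partition_on[OF assms(3) fin, symmetric]
    using M_sub blocks by (simp add: sum_subtractf)
  ultimately show ?thesis ..
qed

end
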